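(* Let $C\subset(\mathbb{R}^+)^2$ be a convex body with $\epsilon\Sigma\subset C\subset\delta\Sigma$ for some $\delta>\epsilon>0$, which is a lower set (for every $n\ge1$, whenever $(j_1,j_2)\in nC\cap\mathbb{N}^2$ we have $(k_1,k_2)\in nC\cap\mathbb{N}^2$ for all integers $0\le k_l\le j_l$, $l=1,2$). Suppose $(b,0)$ and $(0,a)$ are extreme points of $C$ ($a,b>0$) and that the outer face of $C$ (the part of the topological boundary of $C$ not lying on the coordinate axes) can be written both as a graph $\{(x,f(x)):0\le x\le b\}$ and as a graph $\{(g(y),y):0\le y\le a\}$. Let $E,F\subset\mathbb{C}$ be compact and $K=E\times F$. Then $$\delta_C(K)=D(E)^{A/(A+B)}\cdot D(F)^{B/(A+B)},\qquad A=\int_0^b uf(u)\,du,\quad B=\int_0^a ug(u)\,du,$$ where $D(E),D(F)$ are the univariate transfinite diameters of $E,F$. In particular, if $A=B$ then $\delta_C(K)=[D(E)D(F)]^{1/2}$.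
   Context: $\Sigma=\{(x,y):x,y\ge0,\ x+y\le1\}$. For $n\ge1$, $\mathrm{Poly}(nC)$ is the span of the monomials $z^J$, $J\in nC\cap\mathbb{N}^2$, with dimension $d_n$ and monomials $z^{\alpha(j)}$, $j=1,\dots,d_n$. Let $V_n(K)=\max_{\zeta_1,\dots,\zeta_{d_n}\in K}|\det[\zeta_j^{\alpha(i)}]_{i,j=1}^{d_n}|$ and $l_n=\sum_{j=1}^{d_n}|\alpha(j)|$. The $C$-transfinite diameter is $\delta_C(K)=\limsup_n V_n(K)^{1/l_n}$ (known to be a limit). *)

theory Defs
  imports "HOL-Analysis.Analysis"
begin

definition Sigma_simplex :: "(real \<times> real) set" where
  "Sigma_simplex = {(x, y). 0 \<le> x \<and> 0 \<le> y \<and> x + y \<le> 1}"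

definition dil :: "real \<Rightarrow> (real \<times> real) set \<Rightarrow> (real \<times> real) set" where
  "dil t S = (\<lambda>p. t *\<^sub>R p) ` S"

definition lattice_pts :: "(real \<times> real) set \<Rightarrow> nat \<Rightarrow> (nat \<times> nat) set" where
  "lattice_pts C n = {J. (real (fst J), real (snd J)) \<in> dil (real n) C}"

definition monom :: "nat \<times> nat \<Rightarrow> complex \<times> complex \<Rightarrow> complex" where
  "monom J z = fst z ^ fst J * snd z ^ snd J"

text \<open>Determinant of a square matrix indexed by a finite set I (Leibniz formula).
  Its absolute value does not depend on an enumeration of I.\<close>
definition gen_det :: "'i set \<Rightarrow> ('i \<Rightarrow> 'i \<Rightarrow> complex) \<Rightarrow> complex" where
  "gen_det I M = (\<Sum>p\<in>{p. p permutes I}. of_int (sign p) * (\<Prod>i\<in>I. M i (p i)))"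

definition vander_max :: "(real \<times> real) set \<Rightarrow> (complex \<times> complex) set \<Rightarrow> nat \<Rightarrow> real" where
  "vander_max C K n = Sup {cmod (gen_det (lattice_pts C n) (\<lambda>i j. monom i (\<zeta> j))) | \<zeta>.
       \<forall>j\<in>lattice_pts C n. \<zeta> j \<in> K}"

definition deg_sum :: "(real \<times> real) set \<Rightarrow> nat \<Rightarrow> nat" where
  "deg_sum C n = (\<Sum>J\<in>lattice_pts C n. fst J + snd J)"

definition C_transfinite_diameter :: "(real \<times> real) set \<Rightarrow> (complex \<times> complex) set \<Rightarrow> ereal" where
  "C_transfinite_diameter C K =
     limsup (\<lambda>n. ereal (vander_max C K n powr (1 / real (deg_sum C n))))"

definition fekete_max :: "complex set \<Rightarrow> nat \<Rightarrow> real" where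
  "fekete_max E n = Sup {(\<Prod>i<n. \<Prod>j\<in>{i<..<n}. cmod (z i - z j)) | z. \<forall>i<n. z i \<in> E}"

text \<open>Classical univariate transfinite diameter D(E)
  = lim (max prod_{i<j}|z_i-z_j|)^{2/(n(n-1))} (a limit; written as limsup).\<close>
definition transfinite_diameter :: "complex set \<Rightarrow> real" where
  "transfinite_diameter E =
     real_of_ereal (limsup (\<lambda>n. ereal (fekete_max E n powr (2 / (real n * (real n - 1))))))"

definition outer_face :: "(real \<times> real) set \<Rightarrow> (real \<times> real) set" where
  "outer_face C = closure (frontier C - {p. fst p = 0 \<or> snd p = 0})"

end

(* On a lower set of exponents the Vandermonde determinant of monomials equals that of the products
   P_i(z1) Q_j(z2) of monic polynomials of degrees i and j, the change of basis being unitriangular.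
   Choosing P and Q with sup norms O((T(E) + t)^i) and O((T(F) + t)^j) on E and F, where T is the
   Chebyshev constant, bounds V_n(E x F) above by N! M^N (T(E) + t)^X_n (T(F) + t)^Y_n, where N is the
   number of exponents and X_n, Y_n are the sums of their first and second coordinates; evaluating at
   grid points built from Leja sequences of E and F bounds it below by T(E)^X_n T(F)^Y_n.  Counting
   lattice points column by column under the graphs of f and g gives X_n ~ A n^3 and Y_n ~ B n^3, and
   l_n = X_n + Y_n, so the factor N! M^N with N = O(n^2) disappears under the l_n-th root.  The same
   estimates in one variable show that the transfinite diameter D equals T. *)

theory Submission
  imports Defs "Jordan_Normal_Form.Determinant" "HOL-Real_Asymp.Real_Asymp"
begin

section \<open>Determinants indexed by finite sets\<close>

lemma permutes_eq_id_if_weight_increasing: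
  fixes w :: "'a \<Rightarrow> int"
  assumes fin: "finite S" and p: "p permutes S"
    and incr: "\<And>i. i \<in> S \<Longrightarrow> p i = i \<or> w i < w (p i)"
  shows "p = id"
proof -
  have le: "\<forall>i\<in>S. w i \<le> (w \<circ> p) i" using incr by force
  have "sum w S = sum (w \<circ> p) S" using sum.permute[OF p] by simp
  then have "\<forall>i\<in>S. p i = i"
    using sum_strict_mono_ex1[OF fin le] incr by (metis less_irrefl o_apply)
  then show ?thesis using p unfolding permutes_def by (metis eq_id_iff)
qed

lemma gen_det_triangular:
  fixes M :: "'a \<Rightarrow> 'a \<Rightarrow> complex" and w :: "'a \<Rightarrow> int"
  assumes fin: "finite S"
    and tri: "\<And>I J. I \<in> S \<Longrightarrow> J \<in> S \<Longrightarrow> M I J \<noteq> 0 \<Longrightarrow> I \<noteq> J \<Longrightarrow> w I < w J"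
  shows "gen_det S M = (\<Prod>I\<in>S. M I I)"
proof -
  let ?g = "\<lambda>p. of_int (sign p) * (\<Prod>i\<in>S. M i (p i))"
  have vanish: "?g p = 0" if "p permutes S" "p \<noteq> id" for p
  proof (rule ccontr)
    assume "?g p \<noteq> 0"
    then have "\<forall>i\<in>S. M i (p i) \<noteq> 0" using fin by auto
    then have "p = id"
      using permutes_eq_id_if_weight_increasing[OF fin that(1)] tri that(1)
      by (metis permutes_in_image)
    with that show False by simp
  qed
  have "gen_det S M = sum ?g {p. p permutes S}" unfolding gen_det_def by simp
  also have "\<dots> = sum ?g {id}"
    by (rule sum.mono_neutral_right) (use fin vanish permutes_id in \<open>auto simp: finite_permutations\<close>)
  finally show ?thesis by simp
qed

lemma gen_det_eq_det_mat:
  fixes M :: "'a \<Rightarrow> 'a \<Rightarrow> complex"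
  assumes e: "bij_betw e {0..<n} S"
  shows "gen_det S M = det (mat n n (\<lambda>(i, j). M (e i) (e j)))"
proof -
  let ?A = "{0..<n}" and ?e' = "inv_into {0..<n} e"
  have inj: "inj_on e ?A" using e by (rule bij_betw_imp_inj_on)
  have e': "bij_betw ?e' S ?A" by (rule bij_betw_inv_into[OF e])
  have "det (mat n n (\<lambda>(i, j). M (e i) (e j))) =
      (\<Sum>q | q permutes ?A. of_int (sign q) * (\<Prod>i\<in>?A. M (e i) (e (q i))))"
    unfolding det_def'[OF mat_carrier]
    by (intro sum.cong refl arg_cong2[where f = "(*)"] prod.cong) (auto simp: permutes_in_image)
  also have "\<dots> = gen_det S M"
    unfolding gen_det_def
  proof (rule sum.reindex_bij_witness[where j = "map_permutation ?A e" and i = "map_permutation S ?e'"])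
    fix q assume "q \<in> {q. q permutes ?A}"
    then have q: "q permutes ?A" by simp
    show "map_permutation S ?e' (map_permutation ?A e q) = q"
      by (rule map_permutation_compose_inv[OF e q]) (use e in \<open>simp add: bij_betw_inv_into_left\<close>)
    show "map_permutation ?A e q \<in> {p. p permutes S}"
      using map_permutation_permutes[OF e q] by simp
    have "(\<Prod>I\<in>S. M I (map_permutation ?A e q I)) = (\<Prod>i\<in>?A. M (e i) (map_permutation ?A e q (e i)))"
      using prod.reindex_bij_betw[OF e, symmetric] by simp
    also have "\<dots> = (\<Prod>i\<in>?A. M (e i) (e (q i)))"
      using inj by (intro prod.cong refl) (simp add: map_permutation_apply)
    finally show "of_int (sign (map_permutation ?A e q)) * (\<Prod>I\<in>S. M I (map_permutation ?A e q I)) =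
        of_int (sign q) * (\<Prod>i\<in>?A. M (e i) (e (q i)))"
      using sign_map_permutation[OF inj q] by simp
  next
    fix p assume "p \<in> {p. p permutes S}"
    then have p: "p permutes S" by simp
    show "map_permutation ?A e (map_permutation S ?e' p) = p"
      by (rule map_permutation_compose_inv[OF e' p]) (use e in \<open>simp add: bij_betw_inv_into_right\<close>)
    show "map_permutation S ?e' p \<in> {q. q permutes ?A}"
      using map_permutation_permutes[OF e' p] by simp
  qed
  finally show ?thesis ..
qed

lemma gen_det_mult:
  fixes A B :: "'a \<Rightarrow> 'a \<Rightarrow> complex"
  assumes fin: "finite S"
  shows "gen_det S (\<lambda>I J. \<Sum>K\<in>S. A I K * B K J) = gen_det S A * gen_det S B"
proof -
  define n where "n = card S"
  obtain e where e: "bij_betw e {0..<n} S"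
    using ex_bij_betw_nat_finite[OF fin] unfolding n_def by blast
  let ?A = "mat n n (\<lambda>(i, j). A (e i) (e j))" and ?B = "mat n n (\<lambda>(i, j). B (e i) (e j))"
  have "mat n n (\<lambda>(i, j). \<Sum>K\<in>S. A (e i) K * B K (e j)) = ?A * ?B"
  proof (rule eq_matI)
    fix i j assume "i < dim_row (?A * ?B)" "j < dim_col (?A * ?B)"
    then have "i < n" "j < n" by auto
    moreover have "(\<Sum>k\<in>{0..<n}. A (e i) (e k) * B (e k) (e j)) = (\<Sum>K\<in>S. A (e i) K * B K (e j))"
      using sum.reindex_bij_betw[OF e] by simp
    ultimately show "mat n n (\<lambda>(i, j). \<Sum>K\<in>S. A (e i) K * B K (e j)) $$ (i, j) = (?A * ?B) $$ (i, j)"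
      by (simp add: scalar_prod_def)
  qed auto
  then show ?thesis
    using gen_det_eq_det_mat[OF e] det_mult[of ?A n ?B] by simp
qed

lemma gen_det_mult_unitriangular:
  fixes U M :: "'a \<Rightarrow> 'a \<Rightarrow> complex" and w :: "'a \<Rightarrow> int"
  assumes fin: "finite S"
    and diag: "\<And>I. I \<in> S \<Longrightarrow> U I I = 1"
    and tri: "\<And>I K. I \<in> S \<Longrightarrow> K \<in> S \<Longrightarrow> U I K \<noteq> 0 \<Longrightarrow> I \<noteq> K \<Longrightarrow> w K < w I"
  shows "gen_det S (\<lambda>I J. \<Sum>K\<in>S. U I K * M K J) = gen_det S M"
proof -
  have "gen_det S U = (\<Prod>I\<in>S. U I I)"
    by (rule gen_det_triangular[where w = "\<lambda>I. - w I"]) (use fin tri in force)+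
  also have "\<dots> = 1" using diag by simp
  finally show ?thesis using gen_det_mult[OF fin] by simp
qed

section \<open>Monomial determinants on lower sets\<close>

definition lower_set :: "(nat \<times> nat) set \<Rightarrow> bool" where
  "lower_set S \<longleftrightarrow> (\<forall>I\<in>S. \<forall>K. fst K \<le> fst I \<and> snd K \<le> snd I \<longrightarrow> K \<in> S)"

lemma lower_set_iff:
  "lower_set S \<longleftrightarrow> (\<forall>j1 j2. (j1, j2) \<in> S \<longrightarrow> (\<forall>k1 k2. k1 \<le> j1 \<and> k2 \<le> j2 \<longrightarrow> (k1, k2) \<in> S))"
  unfolding lower_set_def by fastforce

definition monic_seq :: "(nat \<Rightarrow> complex poly) \<Rightarrow> bool" where
  "monic_seq P \<longleftrightarrow> (\<forall>j. degree (P j) = j \<and> coeff (P j) j = 1)"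

lemma poly_times_poly_eq_sum_monom:
  fixes p q :: "complex poly"
  shows "poly p z1 * poly q z2 =
    (\<Sum>K\<in>{..degree p} \<times> {..degree q}. (coeff p (fst K) * coeff q (snd K)) * monom K (z1, z2))"
proof -
  have "poly p z1 * poly q z2 =
      (\<Sum>i\<le>degree p. \<Sum>j\<le>degree q. (coeff p i * z1 ^ i) * (coeff q j * z2 ^ j))"
    by (simp add: poly_altdef sum_product)
  also have "\<dots> = (\<Sum>K\<in>{..degree p} \<times> {..degree q}. (coeff p (fst K) * coeff q (snd K)) * monom K (z1, z2))"
    by (simp add: sum.cartesian_product split_def monom_def mult_ac)
  finally show ?thesis .
qed

text \<open>Passing from the monomials to products of monic polynomials is a change of basis that is
  unitriangular for the total degree, and on a lower set it stays within the index set.\<close>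

lemma gen_det_monic_seq_eq_gen_det_monom:
  assumes fin: "finite S" and low: "lower_set S" and P: "monic_seq P" and Q: "monic_seq Q"
  shows "gen_det S (\<lambda>I J. poly (P (fst I)) (fst (\<zeta> J)) * poly (Q (snd I)) (snd (\<zeta> J)))
       = gen_det S (\<lambda>I J. monom I (\<zeta> J))"
proof -
  define U where "U = (\<lambda>I K. coeff (P (fst I)) (fst K) * coeff (Q (snd I)) (snd K))"
  have expand: "poly (P (fst I)) (fst (\<zeta> J)) * poly (Q (snd I)) (snd (\<zeta> J)) =
      (\<Sum>K\<in>S. U I K * monom K (\<zeta> J))" if I: "I \<in> S" for I J
  proof -
    have dP: "degree (P (fst I)) = fst I" and dQ: "degree (Q (snd I)) = snd I"
      using P Q by (auto simp: monic_seq_def)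
    have sub: "{..fst I} \<times> {..snd I} \<subseteq> S" using low I by (auto simp: lower_set_def)
    have "poly (P (fst I)) (fst (\<zeta> J)) * poly (Q (snd I)) (snd (\<zeta> J)) =
        (\<Sum>K\<in>{..fst I} \<times> {..snd I}. U I K * monom K (\<zeta> J))"
      using poly_times_poly_eq_sum_monom[of "P (fst I)" "fst (\<zeta> J)" "Q (snd I)" "snd (\<zeta> J)"] dP dQ
      by (simp add: U_def)
    also have "\<dots> = (\<Sum>K\<in>S. U I K * monom K (\<zeta> J))"
      by (rule sum.mono_neutral_left[OF fin sub]) (use dP dQ in \<open>force simp: U_def dest: le_degree\<close>)
    finally show ?thesis .
  qed
  have "gen_det S (\<lambda>I J. poly (P (fst I)) (fst (\<zeta> J)) * poly (Q (snd I)) (snd (\<zeta> J)))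
      = gen_det S (\<lambda>I J. \<Sum>K\<in>S. U I K * monom K (\<zeta> J))"
    unfolding gen_det_def
    by (intro sum.cong refl arg_cong2[where f = "(*)"] prod.cong) (auto simp: expand permutes_in_image)
  also have "\<dots> = gen_det S (\<lambda>I J. monom I (\<zeta> J))"
  proof (rule gen_det_mult_unitriangular[OF fin, where w = "\<lambda>K. int (fst K + snd K)"])
    show "U I I = 1" if "I \<in> S" for I using P Q by (simp add: U_def monic_seq_def)
    show "int (fst K + snd K) < int (fst I + snd I)" if "U I K \<noteq> 0" "I \<noteq> K" for I K
    proof -
      have "fst K \<le> fst I" "snd K \<le> snd I"
        using that(1) P Q by (auto simp: U_def monic_seq_def dest!: le_degree)
      then show ?thesis using that(2) by (cases I, cases K) auto
    qed
  qed
  finally show ?thesis .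
qed

lemma monic_seq_newton: "monic_seq (\<lambda>j. \<Prod>k<j. [:- x k, 1:])"
  unfolding monic_seq_def
proof
  fix j
  have "degree (\<Prod>k<j. [:- x k, 1:]) = j"
    by (subst degree_prod_eq_sum_degree) auto
  moreover have "lead_coeff (\<Prod>k<j. [:- x k, 1:]) = 1"
    by (simp add: lead_coeff_prod)
  ultimately show "degree (\<Prod>k<j. [:- x k, 1:]) = j \<and> coeff (\<Prod>k<j. [:- x k, 1:]) j = 1"
    by simp
qed

text \<open>At grid points the matrix becomes triangular in the Newton basis.\<close>

lemma gen_det_monom_grid:
  fixes x y :: "nat \<Rightarrow> complex"
  assumes fin: "finite S" and low: "lower_set S"
  shows "gen_det S (\<lambda>I J. monom I (x (fst J), y (snd J))) =
     (\<Prod>I\<in>S. (\<Prod>k<fst I. x (fst I) - x k) * (\<Prod>l<snd I. y (snd I) - y l))"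
proof -
  let ?P = "\<lambda>j. \<Prod>k<j. [:- x k, 1:]" and ?Q = "\<lambda>j. \<Prod>k<j. [:- y k, 1:]"
  have "gen_det S (\<lambda>I J. monom I (x (fst J), y (snd J))) =
      gen_det S (\<lambda>I J. poly (?P (fst I)) (x (fst J)) * poly (?Q (snd I)) (y (snd J)))"
    using gen_det_monic_seq_eq_gen_det_monom[OF fin low monic_seq_newton monic_seq_newton,
        where \<zeta> = "\<lambda>J. (x (fst J), y (snd J))"] by simp
  also have "\<dots> = gen_det S (\<lambda>I J. (\<Prod>k<fst I. x (fst J) - x k) * (\<Prod>l<snd I. y (snd J) - y l))"
    by (simp add: poly_prod)
  also have "\<dots> = (\<Prod>I\<in>S. (\<Prod>k<fst I. x (fst I) - x k) * (\<Prod>l<snd I. y (snd I) - y l))"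
  proof (rule gen_det_triangular[OF fin, where w = "\<lambda>K. int (fst K + snd K)"])
    fix I J :: "nat \<times> nat"
    assume nz: "(\<Prod>k<fst I. x (fst J) - x k) * (\<Prod>l<snd I. y (snd J) - y l) \<noteq> 0" and "I \<noteq> J"
    have "fst I \<le> fst J" "snd I \<le> snd J"
      using nz by (auto simp: not_le intro: prod_zero)
    then show "int (fst I + snd I) < int (fst J + snd J)" using \<open>I \<noteq> J\<close> by (cases I, cases J) auto
  qed
  finally show ?thesis .
qed

lemma norm_gen_det_monom_le:
  assumes fin: "finite S" and low: "lower_set S" and P: "monic_seq P" and Q: "monic_seq Q"
    and bP: "\<And>I J. I \<in> S \<Longrightarrow> J \<in> S \<Longrightarrow> cmod (poly (P (fst I)) (fst (\<zeta> J))) \<le> cP (fst I)"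
    and bQ: "\<And>I J. I \<in> S \<Longrightarrow> J \<in> S \<Longrightarrow> cmod (poly (Q (snd I)) (snd (\<zeta> J))) \<le> cQ (snd I)"
  shows "cmod (gen_det S (\<lambda>I J. monom I (\<zeta> J))) \<le> fact (card S) * (\<Prod>I\<in>S. cP (fst I) * cQ (snd I))"
proof -
  let ?M = "\<lambda>I J. poly (P (fst I)) (fst (\<zeta> J)) * poly (Q (snd I)) (snd (\<zeta> J))"
  have term_le: "cmod (of_int (sign p) * (\<Prod>I\<in>S. ?M I (p I))) \<le> (\<Prod>I\<in>S. cP (fst I) * cQ (snd I))"
    if p: "p permutes S" for p
  proof -
    have "cmod (of_int (sign p) * (\<Prod>I\<in>S. ?M I (p I))) = (\<Prod>I\<in>S. cmod (?M I (p I)))"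
      by (simp add: norm_mult prod_norm[symmetric] sign_def)
    also have "\<dots> \<le> (\<Prod>I\<in>S. cP (fst I) * cQ (snd I))"
    proof (rule prod_mono)
      fix I assume I: "I \<in> S"
      then have "p I \<in> S" using p by (simp add: permutes_in_image)
      then show "0 \<le> cmod (?M I (p I)) \<and> cmod (?M I (p I)) \<le> cP (fst I) * cQ (snd I)"
        using bP[OF I] bQ[OF I] by (simp add: norm_mult mult_mono' order_trans[OF norm_ge_zero])
    qed
    finally show ?thesis .
  qed
  have "cmod (gen_det S (\<lambda>I J. monom I (\<zeta> J))) = cmod (gen_det S ?M)"
    using gen_det_monic_seq_eq_gen_det_monom[OF fin low P Q] by simp
  also have "\<dots> \<le> (\<Sum>p | p permutes S. cmod (of_int (sign p) * (\<Prod>I\<in>S. ?M I (p I))))"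
    unfolding gen_det_def by (rule norm_sum)
  also have "\<dots> \<le> (\<Sum>p | p permutes S. (\<Prod>I\<in>S. cP (fst I) * cQ (snd I)))"
    by (rule sum_mono) (simp add: term_le)
  also have "\<dots> = fact (card S) * (\<Prod>I\<in>S. cP (fst I) * cQ (snd I))"
    using card_permutations[OF refl fin] by simp
  finally show ?thesis .
qed

section \<open>Chebyshev constant and transfinite diameter\<close>

definition poly_sup :: "complex set \<Rightarrow> complex poly \<Rightarrow> real" where
  "poly_sup E p = Sup ((\<lambda>z. cmod (poly p z)) ` E)"

definition chebyshev_constant :: "complex set \<Rightarrow> real" where
  "chebyshev_constant E =
     Inf {poly_sup E p powr (1 / real (degree p)) | p. lead_coeff p = 1 \<and> degree p \<ge> 1}"

lemma norm_poly_le_poly_sup: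
  assumes "compact E" "z \<in> E"
  shows "cmod (poly p z) \<le> poly_sup E p"
proof -
  have "compact ((\<lambda>z. cmod (poly p z)) ` E)"
    by (rule compact_continuous_image[OF _ assms(1)]) (intro continuous_intros)
  then have "bdd_above ((\<lambda>z. cmod (poly p z)) ` E)"
    by (meson bounded_imp_bdd_above compact_imp_bounded)
  then show ?thesis unfolding poly_sup_def using assms(2) by (intro cSup_upper) auto
qed

lemma poly_sup_attained:
  assumes "compact E" "E \<noteq> {}"
  obtains z where "z \<in> E" "poly_sup E p = cmod (poly p z)"
proof -
  have "continuous_on E (\<lambda>z. cmod (poly p z))" by (intro continuous_intros)
  then obtain z where z: "z \<in> E" "\<forall>w\<in>E. cmod (poly p w) \<le> cmod (poly p z)"
    using continuous_attains_sup[OF assms] by blast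
  have "poly_sup E p = cmod (poly p z)"
    unfolding poly_sup_def using z by (intro antisym cSup_least cSup_upper) auto
  with z that show ?thesis by blast
qed

lemma poly_sup_nonneg: "compact E \<Longrightarrow> E \<noteq> {} \<Longrightarrow> 0 \<le> poly_sup E p"
  by (metis poly_sup_attained norm_ge_zero)

lemma powr_inverse_power:
  fixes x :: real
  assumes "0 \<le> x" "0 < n"
  shows "(x powr (1 / real n)) ^ n = x" and "(x ^ n) powr (1 / real n) = x"
proof -
  show "(x powr (1 / real n)) ^ n = x"
  proof (cases "x = 0")
    case False
    then have "(x powr (1 / real n)) ^ n = (x powr (1 / real n)) powr (real n)"
      using assms by (simp add: powr_realpow)
    also have "\<dots> = x" using assms by (simp add: powr_powr)
    finally show ?thesis .
  qed (use assms in simp)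
  show "(x ^ n) powr (1 / real n) = x"
  proof (cases "x = 0")
    case False
    then have "(x ^ n) powr (1 / real n) = (x powr real n) powr (1 / real n)"
      using assms by (simp add: powr_realpow)
    also have "\<dots> = x" using assms by (simp add: powr_powr)
    finally show ?thesis .
  qed (use assms in simp)
qed

lemma chebyshev_constant_nonneg: "0 \<le> chebyshev_constant E"
  unfolding chebyshev_constant_def
  by (rule cInf_greatest) (auto intro!: exI[of _ "[:0, 1::complex:]"])

lemma chebyshev_constant_power_le_poly_sup:
  assumes E: "compact E" "E \<noteq> {}" and p: "lead_coeff p = 1"
  shows "chebyshev_constant E ^ degree p \<le> poly_sup E p"
proof (cases "degree p = 0")
  case True
  then obtain a where "p = [:a:]" by (rule degree_eq_zeroE)
  then have "p = 1" using p by (simp add: one_pCons)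
  then show ?thesis using E True by (simp add: poly_sup_def)
next
  case False
  let ?d = "degree p"
  have "chebyshev_constant E \<le> poly_sup E p powr (1 / real ?d)"
    unfolding chebyshev_constant_def
    by (rule cInf_lower) (use p False in \<open>auto intro!: bdd_belowI[of _ 0]\<close>)
  then have "chebyshev_constant E ^ ?d \<le> (poly_sup E p powr (1 / real ?d)) ^ ?d"
    by (intro power_mono chebyshev_constant_nonneg)
  also have "\<dots> = poly_sup E p"
    using poly_sup_nonneg[OF E] False by (intro powr_inverse_power) auto
  finally show ?thesis .
qed

lemma monic_seq_power_padding:
  fixes p :: "complex poly"
  assumes p: "lead_coeff p = 1" "0 < degree p" and c: "0 < c"
    and p_le: "\<And>z. z \<in> E \<Longrightarrow> cmod (poly p z) \<le> c ^ degree p"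
    and R: "1 \<le> R" "\<And>z. z \<in> E \<Longrightarrow> cmod z \<le> R"
  defines "P \<equiv> \<lambda>j. p ^ (j div degree p) * [:0, 1:] ^ (j mod degree p)"
  shows "monic_seq P" and "z \<in> E \<Longrightarrow> cmod (poly (P j) z) \<le> (R / c + 1) ^ degree p * c ^ j"
proof -
  let ?k = "degree p"
  show "monic_seq P" unfolding monic_seq_def
  proof
    fix j
    have "p \<noteq> 0" using p by auto
    then have "degree (P j) = ?k * (j div ?k) + j mod ?k"
      by (simp add: P_def degree_mult_eq degree_power_eq)
    also have "\<dots> = j" by simp
    moreover have "lead_coeff (P j) = 1" using p by (simp add: P_def lead_coeff_mult lead_coeff_power)
    ultimately show "degree (P j) = j \<and> coeff (P j) j = 1" by simp
  qed
  assume z: "z \<in> E"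
  define q r where "q = j div ?k" and "r = j mod ?k"
  have j: "j = ?k * q + r" by (simp add: q_def r_def)
  have "cmod (poly (P j) z) = cmod (poly p z) ^ q * cmod z ^ r"
    by (simp add: P_def q_def r_def norm_mult norm_power)
  also have "\<dots> \<le> (c ^ ?k) ^ q * R ^ r"
    using p_le[OF z] R(2)[OF z] c by (intro mult_mono power_mono) auto
  also have "\<dots> = c ^ j * (R / c) ^ r"
    using c by (simp add: j power_add power_mult power_divide)
  also have "\<dots> \<le> c ^ j * (R / c + 1) ^ ?k"
    using c R(1) p(2)
    by (intro mult_left_mono order_trans[OF power_mono power_increasing]) (auto simp: r_def)
  finally show "cmod (poly (P j) z) \<le> (R / c + 1) ^ ?k * c ^ j" by (simp add: mult.commute)
qed

lemma monic_seq_geometric_bound: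
  assumes E: "compact E" "E \<noteq> {}" and \<eta>: "0 < \<eta>"
  obtains P M where "monic_seq P" "1 \<le> M"
    "\<And>j z. z \<in> E \<Longrightarrow> cmod (poly (P j) z) \<le> M * (chebyshev_constant E + \<eta>) ^ j"
proof -
  define c where "c = chebyshev_constant E + \<eta>"
  have c: "0 < c" using chebyshev_constant_nonneg[of E] \<eta> by (simp add: c_def)
  have "chebyshev_constant E < c" using \<eta> by (simp add: c_def)
  moreover have "poly_sup E [:0, 1:] powr (1 / real (degree [:0, 1::complex:])) \<in>
      {poly_sup E p powr (1 / real (degree p)) | p. lead_coeff p = 1 \<and> degree p \<ge> 1}"
    by (intro CollectI exI[of _ "[:0, 1:]"]) simp
  ultimately obtain p where p: "lead_coeff p = 1" "0 < degree p" "poly_sup E p powr (1 / real (degree p)) < c"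
    unfolding chebyshev_constant_def by (auto dest!: cInf_lessD[rotated])
  have "poly_sup E p = (poly_sup E p powr (1 / real (degree p))) ^ degree p"
    using poly_sup_nonneg[OF E] p(2) by (simp add: powr_inverse_power)
  also have "\<dots> \<le> c ^ degree p" using p(3) by (intro power_mono) auto
  finally have p_le: "cmod (poly p z) \<le> c ^ degree p" if "z \<in> E" for z
    using norm_poly_le_poly_sup[OF E(1) that, of p] by linarith
  obtain R0 where "\<forall>z\<in>E. cmod z \<le> R0" using compact_imp_bounded[OF E(1)] bounded_iff by blast
  then have R: "1 \<le> max 1 R0" "\<And>z. z \<in> E \<Longrightarrow> cmod z \<le> max 1 R0" by auto
  have "0 \<le> max 1 R0 / c" using c by simp
  then have M: "1 \<le> (max 1 R0 / c + 1) ^ degree p" by (simp add: one_le_power)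
  show ?thesis
    using that[OF monic_seq_power_padding(1)[OF p(1,2) c p_le R] M]
      monic_seq_power_padding(2)[OF p(1,2) c p_le R]
    unfolding c_def by blast
qed

definition leja_pick :: "complex set \<Rightarrow> complex list \<Rightarrow> complex" where
  "leja_pick E xs = (SOME z. z \<in> E \<and>
     (\<forall>w\<in>E. (\<Prod>k<length xs. cmod (w - xs ! k)) \<le> (\<Prod>k<length xs. cmod (z - xs ! k))))"

fun leja_list :: "complex set \<Rightarrow> nat \<Rightarrow> complex list" where
  "leja_list E 0 = []"
| "leja_list E (Suc n) = leja_list E n @ [leja_pick E (leja_list E n)]"

lemma length_leja_list [simp]: "length (leja_list E n) = n"
  by (induction n) auto

lemma nth_leja_list: "k < n \<Longrightarrow> leja_list E n ! k = leja_pick E (leja_list E k)"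
  by (induction n) (auto simp: nth_append less_Suc_eq)

lemma leja_pick:
  assumes E: "compact E" "E \<noteq> {}"
  shows "leja_pick E xs \<in> E"
    and "\<And>w. w \<in> E \<Longrightarrow> (\<Prod>k<length xs. cmod (w - xs ! k)) \<le> (\<Prod>k<length xs. cmod (leja_pick E xs - xs ! k))"
proof -
  have "\<exists>z\<in>E. \<forall>w\<in>E. (\<Prod>k<length xs. cmod (w - xs ! k)) \<le> (\<Prod>k<length xs. cmod (z - xs ! k))"
    by (rule continuous_attains_sup[OF E]) (intro continuous_intros)
  then have "leja_pick E xs \<in> E \<and>
      (\<forall>w\<in>E. (\<Prod>k<length xs. cmod (w - xs ! k)) \<le> (\<Prod>k<length xs. cmod (leja_pick E xs - xs ! k)))"
    unfolding leja_pick_def by (rule someI2_bex) blast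
  then show "leja_pick E xs \<in> E"
    and "\<And>w. w \<in> E \<Longrightarrow> (\<Prod>k<length xs. cmod (w - xs ! k)) \<le> (\<Prod>k<length xs. cmod (leja_pick E xs - xs ! k))"
    by auto
qed

text \<open>Each point of a Leja sequence maximises the product of distances to its predecessors; that
  maximum is the sup norm of a monic polynomial of degree \<open>j\<close>, hence at least
  \<open>chebyshev_constant E ^ j\<close>.\<close>

lemma leja_sequence_exists:
  assumes E: "compact E" "E \<noteq> {}"
  obtains x where "\<And>j. x j \<in> E" "\<And>j. chebyshev_constant E ^ j \<le> (\<Prod>k<j. cmod (x j - x k))"
proof -
  define x where "x = (\<lambda>j. leja_pick E (leja_list E j))"
  have prefix: "leja_list E j ! k = x k" if "k < j" for j k
    using that by (simp add: x_def nth_leja_list)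
  have "chebyshev_constant E ^ j \<le> (\<Prod>k<j. cmod (x j - x k))" for j
  proof -
    define q where "q = (\<Prod>k<j. [:- x k, 1:])"
    have q: "lead_coeff q = 1" "degree q = j"
      using monic_seq_newton[of x] by (auto simp: monic_seq_def q_def)
    obtain w where w: "w \<in> E" "poly_sup E q = cmod (poly q w)" using poly_sup_attained[OF E] .
    have "chebyshev_constant E ^ j \<le> poly_sup E q"
      using chebyshev_constant_power_le_poly_sup[OF E q(1)] q(2) by simp
    also have "\<dots> = (\<Prod>k<j. cmod (w - x k))" using w by (simp add: q_def poly_prod prod_norm)
    also have "\<dots> \<le> (\<Prod>k<j. cmod (x j - x k))"
      using leja_pick(2)[OF E w(1), of "leja_list E j"] by (simp add: prefix x_def)
    finally show ?thesis .
  qed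
  moreover have "x j \<in> E" for j unfolding x_def by (rule leja_pick(1)[OF E])
  ultimately show ?thesis using that by blast
qed

lemma prod_upper_triangle_swap:
  fixes g :: "nat \<Rightarrow> nat \<Rightarrow> 'a::comm_monoid_mult"
  shows "(\<Prod>i<m. \<Prod>j\<in>{i<..<m}. g i j) = (\<Prod>j<m. \<Prod>i<j. g i j)"
proof (induction m)
  case (Suc m)
  have "(\<Prod>i<Suc m. \<Prod>j\<in>{i<..<Suc m}. g i j) = (\<Prod>i<m. g i m * (\<Prod>j\<in>{i<..<m}. g i j))"
  proof -
    have "{i<..<Suc m} = insert m {i<..<m}" if "i < m" for i using that by auto
    moreover have "{m<..<Suc m} = {}" by auto
    ultimately show ?thesis by (simp add: lessThan_Suc)
  qed
  also have "\<dots> = (\<Prod>j<Suc m. \<Prod>i<j. g i j)"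
    using Suc by (simp add: prod.distrib mult.commute)
  finally show ?case .
qed simp

lemma real_sum_lessThan_id: "2 * real (\<Sum>i<m. i) = real m * (real m - 1)"
  by (induction m) (simp_all add: algebra_simps)

lemma prod_Times_singleton: "prod h (A \<times> {b}) = (\<Prod>a\<in>A. h (a, b))"
proof -
  have "A \<times> {b} = (\<lambda>a. (a, b)) ` A" by auto
  then show ?thesis by (simp add: prod.reindex inj_on_def)
qed

lemma sum_lessThan_id_pos: "2 \<le> m \<Longrightarrow> 0 < (\<Sum>i<m. i::nat)"
  by (rule sum_pos2[where i = 1]) auto

lemma fekete_product_eq_norm_gen_det:
  "(\<Prod>i<m. \<Prod>j\<in>{i<..<m}. cmod (z i - z j)) =
     cmod (gen_det ({..<m} \<times> {0}) (\<lambda>I J. monom I (z (fst J), 0)))"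
proof -
  have fin: "finite ({..<m} \<times> {0::nat})" and low: "lower_set ({..<m} \<times> {0})"
    by (auto simp: lower_set_def)
  have "gen_det ({..<m} \<times> {0}) (\<lambda>I J. monom I (z (fst J), (\<lambda>_. 0) (snd J))) =
      (\<Prod>i<m. \<Prod>k<i. z i - z k)"
    using gen_det_monom_grid[OF fin low, where x = z and y = "\<lambda>_. 0"] by (simp add: prod_Times_singleton)
  then have "cmod (gen_det ({..<m} \<times> {0}) (\<lambda>I J. monom I (z (fst J), 0))) =
      (\<Prod>j<m. \<Prod>i<j. cmod (z i - z j))"
    by (simp add: prod_norm[symmetric] norm_minus_commute)
  then show ?thesis by (simp add: prod_upper_triangle_swap)
qed

lemma fekete_product_le:
  assumes P: "monic_seq P" and bnd: "\<And>j w. w \<in> E \<Longrightarrow> cmod (poly (P j) w) \<le> M * c ^ j"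
    and z: "\<forall>i<m. z i \<in> E"
  shows "(\<Prod>i<m. \<Prod>j\<in>{i<..<m}. cmod (z i - z j)) \<le> fact m * (M ^ m * c ^ (\<Sum>i<m. i))"
proof -
  have fin: "finite ({..<m} \<times> {0::nat})" and low: "lower_set ({..<m} \<times> {0})"
    by (auto simp: lower_set_def)
  have "(\<Prod>i<m. \<Prod>j\<in>{i<..<m}. cmod (z i - z j)) =
      cmod (gen_det ({..<m} \<times> {0}) (\<lambda>I J. monom I ((\<lambda>J. (z (fst J), 0)) J)))"
    by (simp add: fekete_product_eq_norm_gen_det)
  also have "\<dots> \<le> fact (card ({..<m} \<times> {0::nat})) *
      (\<Prod>I\<in>{..<m} \<times> {0::nat}. M * c ^ fst I * 1)"
    by (rule norm_gen_det_monom_le[OF fin low P monic_seq_newton[of "\<lambda>_. 0"],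
          where \<zeta> = "\<lambda>J. (z (fst J), 0)" and cP = "\<lambda>j. M * c ^ j" and cQ = "\<lambda>_. 1"])
      (use bnd z in auto)
  also have "\<dots> = fact m * (M ^ m * c ^ (\<Sum>i<m. i))"
    by (simp add: card_cartesian_product prod_Times_singleton prod.distrib power_sum)
  finally show ?thesis .
qed

lemma
  assumes E: "compact E" "E \<noteq> {}"
  shows fekete_max_le: "\<And>P M c. monic_seq P \<Longrightarrow> (\<And>j w. w \<in> E \<Longrightarrow> cmod (poly (P j) w) \<le> M * c ^ j) \<Longrightarrow>
      fekete_max E m \<le> fact m * (M ^ m * c ^ (\<Sum>i<m. i))"
    and chebyshev_constant_power_le_fekete_max:
      "chebyshev_constant E ^ (\<Sum>i<m. i) \<le> fekete_max E m"
proof -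
  let ?X = "{(\<Prod>i<m. \<Prod>j\<in>{i<..<m}. cmod (z i - z j)) | z. \<forall>i<m. z i \<in> E}"
  obtain e where "e \<in> E" using E by blast
  then have ne: "?X \<noteq> {}" by (auto intro!: exI[of _ "\<lambda>_. e"])
  show "fekete_max E m \<le> fact m * (M ^ m * c ^ (\<Sum>i<m. i))"
    if "monic_seq P" "\<And>j w. w \<in> E \<Longrightarrow> cmod (poly (P j) w) \<le> M * c ^ j" for P M c
    unfolding fekete_max_def using ne fekete_product_le[OF that] by (intro cSup_least) auto
  obtain P M where "monic_seq P"
    "\<And>j z. z \<in> E \<Longrightarrow> cmod (poly (P j) z) \<le> M * (chebyshev_constant E + 1) ^ j"
    by (rule monic_seq_geometric_bound[OF E, of 1]) (simp, blast)
  then have bdd: "bdd_above ?X" using fekete_product_le by (intro bdd_aboveI) blast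
  obtain x where x: "\<And>j. x j \<in> E" "\<And>j. chebyshev_constant E ^ j \<le> (\<Prod>k<j. cmod (x j - x k))"
    using leja_sequence_exists[OF E] by blast
  have "chebyshev_constant E ^ (\<Sum>i<m. i) = (\<Prod>j<m. chebyshev_constant E ^ j)"
    by (simp add: power_sum)
  also have "\<dots> \<le> (\<Prod>j<m. \<Prod>k<j. cmod (x k - x j))"
    using x chebyshev_constant_nonneg by (intro prod_mono) (auto simp: norm_minus_commute)
  also have "\<dots> = (\<Prod>i<m. \<Prod>j\<in>{i<..<m}. cmod (x i - x j))"
    by (rule prod_upper_triangle_swap[symmetric])
  also have "\<dots> \<le> fekete_max E m"
    unfolding fekete_max_def using x(1) by (intro cSup_upper[OF _ bdd]) blast
  finally show "chebyshev_constant E ^ (\<Sum>i<m. i) \<le> fekete_max E m" .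
qed

lemma fekete_root_le:
  assumes E: "compact E" "E \<noteq> {}" and P: "monic_seq P" and M: "1 \<le> M" and c: "0 < c"
    and bnd: "\<And>j w. w \<in> E \<Longrightarrow> cmod (poly (P j) w) \<le> M * c ^ j" and m: "2 \<le> m"
  shows "fekete_max E m powr (1 / real (\<Sum>i<m. i)) \<le> (real m * M) powr (2 / (real m - 1)) * c"
proof -
  define N where "N = (\<Sum>i<m. i)"
  have N: "2 * real N = real m * (real m - 1)" unfolding N_def by (rule real_sum_lessThan_id)
  have N0: "0 < N" unfolding N_def using m by (rule sum_lessThan_id_pos)
  have "0 \<le> fekete_max E m"
    using chebyshev_constant_power_le_fekete_max[OF E, of m] chebyshev_constant_nonneg
    by (meson order_trans zero_le_power)
  then have "fekete_max E m powr (1 / real N) \<le> (fact m * (M ^ m * c ^ N)) powr (1 / real N)"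
    using fekete_max_le[OF E P bnd, of m] by (intro powr_mono2) (simp_all add: N_def[symmetric])
  also have "\<dots> \<le> ((real m * M) ^ m * c ^ N) powr (1 / real N)"
  proof (rule powr_mono2)
    have "fact m * M ^ m \<le> real m ^ m * M ^ m"
      using fact_le_power[of m] M by (intro mult_right_mono) auto
    then show "fact m * (M ^ m * c ^ N) \<le> (real m * M) ^ m * c ^ N"
      using c by (simp add: power_mult_distrib mult.assoc[symmetric] mult_right_mono)
  qed (use M c in auto)
  also have "\<dots> = ((real m * M) ^ m) powr (1 / real N) * (c ^ N) powr (1 / real N)"
    using M c by (simp add: powr_mult)
  also have "((real m * M) ^ m) powr (1 / real N) = (real m * M) powr (real m / real N)"
    using M m by (simp add: powr_realpow[symmetric] powr_powr)
  also have "(c ^ N) powr (1 / real N) = c"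
    using c N0 by (simp add: powr_inverse_power)
  also have "real m / real N = 2 / (real m - 1)"
    using N N0 m by (simp add: field_simps)
  finally show ?thesis by (simp add: N_def)
qed

lemma limsup_eq_by_squeeze:
  fixes a lo :: "nat \<Rightarrow> real"
  assumes lo: "\<forall>\<^sub>F n in sequentially. lo n \<le> a n" "lo \<longlonglongrightarrow> L"
    and up: "\<And>\<eta>. 0 < \<eta> \<Longrightarrow> \<exists>u U. u \<longlonglongrightarrow> U \<and> U \<le> L + \<eta> \<and> (\<forall>\<^sub>F n in sequentially. a n \<le> u n)"
  shows "limsup (\<lambda>n. ereal (a n)) = ereal L"
proof (rule antisym)
  show "limsup (\<lambda>n. ereal (a n)) \<le> ereal L"
  proof (rule ereal_le_epsilon2)
    fix \<eta> :: real assume "0 < \<eta>"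
    then obtain u U where u: "u \<longlonglongrightarrow> U" "U \<le> L + \<eta>" "\<forall>\<^sub>F n in sequentially. a n \<le> u n"
      using up by blast
    have "limsup (\<lambda>n. ereal (a n)) \<le> limsup (\<lambda>n. ereal (u n))"
      by (rule Limsup_mono) (use u(3) in \<open>auto elim: eventually_mono\<close>)
    also have "\<dots> = ereal U"
      by (rule lim_imp_Limsup) (use u(1) in \<open>auto intro: tendsto_intros\<close>)
    finally have "limsup (\<lambda>n. ereal (a n)) \<le> ereal U" .
    moreover have "ereal U \<le> ereal L + ereal \<eta>" using u(2) by simp
    ultimately show "limsup (\<lambda>n. ereal (a n)) \<le> ereal L + ereal \<eta>" by (rule order_trans)
  qed
  have "ereal L = limsup (\<lambda>n. ereal (lo n))"
    by (rule lim_imp_Limsup[symmetric]) (use lo(2) in \<open>auto intro: tendsto_intros\<close>)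
  also have "\<dots> \<le> limsup (\<lambda>n. ereal (a n))"
    by (rule Limsup_mono) (use lo(1) in \<open>auto elim: eventually_mono\<close>)
  finally show "ereal L \<le> limsup (\<lambda>n. ereal (a n))" .
qed

theorem transfinite_diameter_eq_chebyshev_constant:
  assumes E: "compact E" "E \<noteq> {}"
  shows "transfinite_diameter E = chebyshev_constant E"
proof -
  let ?T = "chebyshev_constant E"
  have exponent: "2 / (real m * (real m - 1)) = 1 / real (\<Sum>i<m. i)" for m
    by (simp only: real_sum_lessThan_id[of m, symmetric])
  have "limsup (\<lambda>m. ereal (fekete_max E m powr (1 / real (\<Sum>i<m. i)))) = ereal ?T"
  proof (rule limsup_eq_by_squeeze[where lo = "\<lambda>_. ?T"])
    show "\<forall>\<^sub>F m in sequentially. ?T \<le> fekete_max E m powr (1 / real (\<Sum>i<m. i))"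
      using eventually_ge_at_top[of 2]
    proof eventually_elim
      case (elim m)
      then have N: "0 < (\<Sum>i<m. i)" by (rule sum_lessThan_id_pos)
      have "?T = (?T ^ (\<Sum>i<m. i)) powr (1 / real (\<Sum>i<m. i))"
        using powr_inverse_power(2)[OF chebyshev_constant_nonneg N] by simp
      also have "\<dots> \<le> fekete_max E m powr (1 / real (\<Sum>i<m. i))"
        using chebyshev_constant_power_le_fekete_max[OF E] chebyshev_constant_nonneg
        by (intro powr_mono2) (auto simp: sum_nonneg)
      finally show ?case .
    qed
  next
    fix \<eta> :: real assume \<eta>: "0 < \<eta>"
    obtain P M where PM: "monic_seq P" "1 \<le> M" "\<And>j z. z \<in> E \<Longrightarrow> cmod (poly (P j) z) \<le> M * (?T + \<eta>) ^ j"
      using monic_seq_geometric_bound[OF E \<eta>] by blast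
    have c: "0 < ?T + \<eta>" using chebyshev_constant_nonneg[of E] \<eta> by simp
    have "(\<lambda>m. (real m * M) powr (2 / (real m - 1))) \<longlonglongrightarrow> 1" using PM(2) by real_asymp
    then have "(\<lambda>m. (real m * M) powr (2 / (real m - 1)) * (?T + \<eta>)) \<longlonglongrightarrow> 1 * (?T + \<eta>)"
      by (intro tendsto_mult tendsto_const)
    moreover have "\<forall>\<^sub>F m in sequentially.
        fekete_max E m powr (1 / real (\<Sum>i<m. i)) \<le> (real m * M) powr (2 / (real m - 1)) * (?T + \<eta>)"
      using eventually_ge_at_top[of 2] by eventually_elim (rule fekete_root_le[OF E PM(1,2) c PM(3)])
    ultimately show "\<exists>u U. u \<longlonglongrightarrow> U \<and> U \<le> ?T + \<eta> \<and>
        (\<forall>\<^sub>F m in sequentially. fekete_max E m powr (1 / real (\<Sum>i<m. i)) \<le> u m)"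
      by force
  qed (simp)
  then show ?thesis unfolding transfinite_diameter_def exponent by simp
qed

section \<open>Vandermonde determinants on product sets\<close>

lemma deg_sum_eq: "deg_sum C n = (\<Sum>I\<in>lattice_pts C n. fst I) + (\<Sum>I\<in>lattice_pts C n. snd I)"
  by (simp add: deg_sum_def sum.distrib)

lemma vander_max_bounds:
  fixes C :: "(real \<times> real) set" and n :: nat
  defines "S \<equiv> lattice_pts C n"
  assumes E: "compact E" "E \<noteq> {}" and F: "compact F" "F \<noteq> {}"
    and fin: "finite S" and low: "lower_set S"
    and P: "monic_seq P" and bP: "\<And>j w. w \<in> E \<Longrightarrow> cmod (poly (P j) w) \<le> ME * cE ^ j"
    and Q: "monic_seq Q" and bQ: "\<And>j w. w \<in> F \<Longrightarrow> cmod (poly (Q j) w) \<le> MF * cF ^ j"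
  shows "vander_max C (E \<times> F) n
           \<le> fact (card S) * ((ME * MF) ^ card S * (cE ^ (\<Sum>I\<in>S. fst I) * cF ^ (\<Sum>I\<in>S. snd I)))"
    and "chebyshev_constant E ^ (\<Sum>I\<in>S. fst I) * chebyshev_constant F ^ (\<Sum>I\<in>S. snd I)
           \<le> vander_max C (E \<times> F) n"
proof -
  let ?X = "{cmod (gen_det S (\<lambda>i j. monom i (\<zeta> j))) | \<zeta>. \<forall>j\<in>S. \<zeta> j \<in> E \<times> F}"
  let ?B = "fact (card S) * ((ME * MF) ^ card S * (cE ^ (\<Sum>I\<in>S. fst I) * cF ^ (\<Sum>I\<in>S. snd I)))"
  have vander: "vander_max C (E \<times> F) n = Sup ?X" by (simp add: vander_max_def S_def)
  have ub: "t \<le> ?B" if "t \<in> ?X" for t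
  proof -
    obtain \<zeta> where \<zeta>: "t = cmod (gen_det S (\<lambda>i j. monom i (\<zeta> j)))" "\<forall>j\<in>S. \<zeta> j \<in> E \<times> F"
      using \<open>t \<in> ?X\<close> by blast
    have "t \<le> fact (card S) * (\<Prod>I\<in>S. ME * cE ^ fst I * (MF * cF ^ snd I))"
      unfolding \<zeta>(1)
      by (rule norm_gen_det_monom_le[OF fin low P Q, where cP = "\<lambda>j. ME * cE ^ j" and cQ = "\<lambda>j. MF * cF ^ j"])
        (use \<zeta>(2) bP bQ in \<open>auto simp: mem_Times_iff\<close>)
    also have "\<dots> = ?B"
      by (simp add: prod.distrib power_sum power_mult_distrib mult_ac)
    finally show ?thesis .
  qed
  obtain e1 e2 where "e1 \<in> E" "e2 \<in> F" using E F by blast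
  then have "?X \<noteq> {}" by (auto intro!: exI[of _ "\<lambda>_. (e1, e2)"])
  then show "vander_max C (E \<times> F) n \<le> ?B" unfolding vander using ub by (intro cSup_least) auto
  obtain x where x: "\<And>j. x j \<in> E" "\<And>j. chebyshev_constant E ^ j \<le> (\<Prod>k<j. cmod (x j - x k))"
    using leja_sequence_exists[OF E] by blast
  obtain y where y: "\<And>j. y j \<in> F" "\<And>j. chebyshev_constant F ^ j \<le> (\<Prod>k<j. cmod (y j - y k))"
    using leja_sequence_exists[OF F] by blast
  have "chebyshev_constant E ^ (\<Sum>I\<in>S. fst I) * chebyshev_constant F ^ (\<Sum>I\<in>S. snd I) =
      (\<Prod>I\<in>S. chebyshev_constant E ^ fst I * chebyshev_constant F ^ snd I)"
    by (simp add: prod.distrib power_sum)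
  also have "\<dots> \<le> (\<Prod>I\<in>S. (\<Prod>k<fst I. cmod (x (fst I) - x k)) * (\<Prod>l<snd I. cmod (y (snd I) - y l)))"
    using x y chebyshev_constant_nonneg by (intro prod_mono conjI mult_mono) (auto simp: prod_nonneg)
  also have "\<dots> = cmod (gen_det S (\<lambda>i j. monom i ((\<lambda>J. (x (fst J), y (snd J))) j)))"
    by (simp add: gen_det_monom_grid[OF fin low] prod_norm[symmetric] norm_mult)
  also have "\<dots> \<le> vander_max C (E \<times> F) n"
    unfolding vander using x y ub
    by (intro cSup_upper bdd_aboveI[of _ ?B]) (auto simp: mem_Times_iff)
  finally show "chebyshev_constant E ^ (\<Sum>I\<in>S. fst I) * chebyshev_constant F ^ (\<Sum>I\<in>S. snd I)
      \<le> vander_max C (E \<times> F) n" .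
qed

lemma power_powr_divide:
  fixes x l :: real
  assumes "0 \<le> x" "0 < k" "0 < l"
  shows "(x ^ k) powr (1 / l) = x powr (real k / l)"
proof (cases "x = 0")
  case False
  then have "(x ^ k) powr (1 / l) = (x powr real k) powr (1 / l)"
    using assms by (simp add: powr_realpow)
  then show ?thesis by (simp add: powr_powr)
qed (use assms in auto)

text \<open>The factorial and the constants of the polynomial bounds only contribute a factor \<open>N!M^N\<close>
  with \<open>N = O(n^2)\<close>, which disappears under the root of order \<open>l \<ge> c n^3\<close>.\<close>

lemma fact_power_root_tendsto_1:
  fixes N l :: "nat \<Rightarrow> nat"
  assumes M: "M \<ge> 1" and K: "K > 0" and A: "A > 0"
    and ev: "\<forall>\<^sub>F n in sequentially. real (N n) \<le> K * real n ^ 2 \<and> A * real n ^ 3 \<le> real (l n)"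
  shows "(\<lambda>n. (fact (N n) * M ^ N n) powr (1 / real (l n))) \<longlonglongrightarrow> 1"
proof (rule tendsto_sandwich[where f = "\<lambda>_. 1" and h = "\<lambda>n. ((K * real n ^ 2 + 1) * M) powr (K / (A * real n))"])
  show "(\<lambda>n. ((K * real n ^ 2 + 1) * M) powr (K / (A * real n))) \<longlonglongrightarrow> 1" using K M A by real_asymp
  have ev1: "\<forall>\<^sub>F n in sequentially. n \<ge> 1 \<and> real (N n) \<le> K * real n ^ 2 \<and> A * real n ^ 3 \<le> real (l n)"
    using ev eventually_ge_at_top[of 1] by eventually_elim auto
  show "\<forall>\<^sub>F n in sequentially. 1 \<le> (fact (N n) * M ^ N n) powr (1 / real (l n))"
  proof (rule always_eventually, rule allI)
    fix n
    have "(1::real) * 1 \<le> fact (N n) * M ^ N n"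
      by (rule mult_mono) (use M in \<open>auto simp: one_le_power\<close>)
    then show "1 \<le> (fact (N n) * M ^ N n) powr (1 / real (l n))" by (intro ge_one_powr_ge_zero) auto
  qed
  show "\<forall>\<^sub>F n in sequentially.
      (fact (N n) * M ^ N n) powr (1 / real (l n)) \<le> ((K * real n ^ 2 + 1) * M) powr (K / (A * real n))"
    using ev1
  proof eventually_elim
    case (elim n)
    define x where "x = (K * real n ^ 2 + 1) * M"
    have "(1::real) * 1 \<le> (K * real n ^ 2 + 1) * M" using K M by (intro mult_mono) auto
    then have x: "x \<ge> (real (N n) + 1) * M" "x \<ge> 1"
      using elim M unfolding x_def by (auto intro!: mult_right_mono)
    have "0 < A * real n ^ 3" using A elim by simp
    then have l0: "0 < real (l n)" using elim by linarith
    have "fact (N n) * M ^ N n \<le> real (N n) ^ N n * M ^ N n"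
      using M fact_le_power[of "N n"] by (intro mult_right_mono) auto
    also have "\<dots> = (real (N n) * M) ^ N n" by (rule power_mult_distrib[symmetric])
    also have "\<dots> \<le> x ^ N n"
      using x M by (intro power_mono) (auto simp: algebra_simps)
    also have "\<dots> = x powr real (N n)" using x by (simp add: powr_realpow)
    also have "\<dots> \<le> x powr (K * real n ^ 2)" using x elim by (intro powr_mono) auto
    finally have "(fact (N n) * M ^ N n) powr (1 / real (l n)) \<le> (x powr (K * real n ^ 2)) powr (1 / real (l n))"
      using M by (intro powr_mono2) auto
    also have "\<dots> = x powr (K * real n ^ 2 / real (l n))" by (simp add: powr_powr)
    also have "\<dots> \<le> x powr (K / (A * real n))"
    proof (rule powr_mono[OF _ x(2)])
      have "K * real n ^ 2 / real (l n) \<le> K * real n ^ 2 / (A * real n ^ 3)"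
        using elim l0 K A by (intro divide_left_mono) auto
      also have "\<dots> = K / (A * real n)" using elim A by (simp add: field_simps power2_eq_square power3_eq_cube)
      finally show "K * real n ^ 2 / real (l n) \<le> K / (A * real n)" .
    qed
    finally show ?case by (simp add: x_def)
  qed
qed simp

lemma
  fixes C :: "(real \<times> real) set" and n :: nat
  defines "S \<equiv> lattice_pts C n"
  defines "X \<equiv> \<Sum>I\<in>S. fst I" and "Y \<equiv> \<Sum>I\<in>S. snd I"
  assumes E: "compact E" "E \<noteq> {}" and F: "compact F" "F \<noteq> {}"
    and fin: "finite S" and low: "lower_set S" and X: "0 < X" and Y: "0 < Y"
  shows vander_max_root_ge:
      "chebyshev_constant E powr (X / deg_sum C n) * chebyshev_constant F powr (Y / deg_sum C n)
         \<le> vander_max C (E \<times> F) n powr (1 / deg_sum C n)"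
    and vander_max_root_le:
      "\<And>P Q ME MF cE cF. monic_seq P \<Longrightarrow> (\<And>j w. w \<in> E \<Longrightarrow> cmod (poly (P j) w) \<le> ME * cE ^ j) \<Longrightarrow>
       monic_seq Q \<Longrightarrow> (\<And>j w. w \<in> F \<Longrightarrow> cmod (poly (Q j) w) \<le> MF * cF ^ j) \<Longrightarrow> 0 \<le> cE \<Longrightarrow> 0 \<le> cF \<Longrightarrow>
       vander_max C (E \<times> F) n powr (1 / deg_sum C n)
         \<le> (fact (card S) * (ME * MF) ^ card S) powr (1 / deg_sum C n)
            * (cE powr (X / deg_sum C n) * cF powr (Y / deg_sum C n))"
proof -
  let ?TE = "chebyshev_constant E" and ?TF = "chebyshev_constant F" and ?l = "real (deg_sum C n)"
  have "deg_sum C n = X + Y" by (simp add: deg_sum_eq S_def X_def Y_def)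
  then have l: "0 < ?l" using X by simp
  have root: "(a ^ X * b ^ Y) powr (1 / ?l) = a powr (X / ?l) * b powr (Y / ?l)"
    if "0 \<le> a" "0 \<le> b" for a b :: real
    using that X Y l by (simp add: powr_mult power_powr_divide)
  obtain P0 M0 where P0: "monic_seq P0" "\<And>j z. z \<in> E \<Longrightarrow> cmod (poly (P0 j) z) \<le> M0 * (?TE + 1) ^ j"
    by (rule monic_seq_geometric_bound[OF E, of 1]) (simp, blast)
  obtain Q0 N0 where Q0: "monic_seq Q0" "\<And>j z. z \<in> F \<Longrightarrow> cmod (poly (Q0 j) z) \<le> N0 * (?TF + 1) ^ j"
    by (rule monic_seq_geometric_bound[OF F, of 1]) (simp, blast)
  have lower: "?TE ^ X * ?TF ^ Y \<le> vander_max C (E \<times> F) n"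
    unfolding X_def Y_def S_def by (rule vander_max_bounds(2)[OF E F fin[unfolded S_def] low[unfolded S_def] P0 Q0])
  then show "?TE powr (X / ?l) * ?TF powr (Y / ?l) \<le> vander_max C (E \<times> F) n powr (1 / ?l)"
    using chebyshev_constant_nonneg l by (auto simp flip: root intro!: powr_mono2)
  fix P Q ME MF cE cF
  assume P: "monic_seq P" "\<And>j w. w \<in> E \<Longrightarrow> cmod (poly (P j) w) \<le> ME * cE ^ j"
    and Q: "monic_seq Q" "\<And>j w. w \<in> F \<Longrightarrow> cmod (poly (Q j) w) \<le> MF * cF ^ j"
    and c: "0 \<le> cE" "0 \<le> cF"
  have "vander_max C (E \<times> F) n \<le> (fact (card S) * (ME * MF) ^ card S) * (cE ^ X * cF ^ Y)"
    using vander_max_bounds(1)[OF E F fin[unfolded S_def] low[unfolded S_def] P Q]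
    by (simp add: S_def X_def Y_def mult.assoc)
  moreover have "0 \<le> vander_max C (E \<times> F) n"
    using lower chebyshev_constant_nonneg by (meson order_trans zero_le_mult_iff zero_le_power)
  ultimately have "vander_max C (E \<times> F) n powr (1 / ?l)
      \<le> ((fact (card S) * (ME * MF) ^ card S) * (cE ^ X * cF ^ Y)) powr (1 / ?l)"
    by (intro powr_mono2) auto
  also have "\<dots> = (fact (card S) * (ME * MF) ^ card S) powr (1 / ?l) * (cE powr (X / ?l) * cF powr (Y / ?l))"
  proof -
    obtain e f where "e \<in> E" "f \<in> F" using E F by blast
    then have "0 \<le> ME" "0 \<le> MF" using P(2)[of e 0] Q(2)[of f 0] by (auto intro: order_trans[OF norm_ge_zero])
    then show ?thesis using c by (simp add: powr_mult flip: root)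
  qed
  finally show "vander_max C (E \<times> F) n powr (1 / ?l)
      \<le> (fact (card S) * (ME * MF) ^ card S) powr (1 / ?l) * (cE powr (X / ?l) * cF powr (Y / ?l))" .
qed

lemma tendsto_share:
  fixes a b w :: "nat \<Rightarrow> real"
  assumes a: "(\<lambda>n. a n / w n) \<longlonglongrightarrow> A" and b: "(\<lambda>n. b n / w n) \<longlonglongrightarrow> B"
    and AB: "A + B \<noteq> 0" and w: "\<forall>\<^sub>F n in sequentially. w n \<noteq> 0"
  shows "(\<lambda>n. a n / (a n + b n)) \<longlonglongrightarrow> A / (A + B)"
proof -
  have "(\<lambda>n. (a n / w n) / (a n / w n + b n / w n)) \<longlonglongrightarrow> A / (A + B)"
    using AB by (intro tendsto_intros a b)
  moreover have "\<forall>\<^sub>F n in sequentially. (a n / w n) / (a n / w n + b n / w n) = a n / (a n + b n)"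
    using w by eventually_elim (simp add: add_divide_distrib[symmetric])
  ultimately show ?thesis by (rule Lim_transform_eventually)
qed

locale lattice_moments =
  fixes C :: "(real \<times> real) set" and A B K :: real
  assumes finite: "\<And>n. n \<ge> 1 \<Longrightarrow> finite (lattice_pts C n)"
    and lower: "\<And>n. n \<ge> 1 \<Longrightarrow> lower_set (lattice_pts C n)"
    and card: "\<And>n. n \<ge> 1 \<Longrightarrow> real (card (lattice_pts C n)) \<le> K * real n ^ 2" and K_pos: "0 < K"
    and first: "(\<lambda>n. real (\<Sum>I\<in>lattice_pts C n. fst I) / real n ^ 3) \<longlonglongrightarrow> A" and A_pos: "0 < A"
    and second: "(\<lambda>n. real (\<Sum>I\<in>lattice_pts C n. snd I) / real n ^ 3) \<longlonglongrightarrow> B" and B_pos: "0 < B"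
begin

lemma eventually_moments:
  "\<forall>\<^sub>F n in sequentially. 1 \<le> n \<and> 0 < (\<Sum>I\<in>lattice_pts C n. fst I) \<and> 0 < (\<Sum>I\<in>lattice_pts C n. snd I)
     \<and> A / 2 * real n ^ 3 \<le> real (deg_sum C n)"
proof -
  have "A / 2 < A" using A_pos by simp
  show ?thesis
    using order_tendstoD(1)[OF first \<open>A / 2 < A\<close>] order_tendstoD(1)[OF second B_pos] eventually_ge_at_top[of 1]
  proof eventually_elim
    case (elim n)
    then have "A / 2 * real n ^ 3 < real (\<Sum>I\<in>lattice_pts C n. fst I)" "0 < real (\<Sum>I\<in>lattice_pts C n. snd I)"
      by (simp_all add: field_simps zero_less_divide_iff del: of_nat_sum)
    moreover have "0 < A / 2 * real n ^ 3" using A_pos elim by simp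
    ultimately show ?case using elim by (simp add: deg_sum_eq del: of_nat_sum)
  qed
qed

lemma weighted_tendsto:
  assumes "0 \<le> c" "0 \<le> d"
  shows "(\<lambda>n. c powr (real (\<Sum>I\<in>lattice_pts C n. fst I) / real (deg_sum C n)) *
      d powr (real (\<Sum>I\<in>lattice_pts C n. snd I) / real (deg_sum C n)))
    \<longlonglongrightarrow> c powr (A / (A + B)) * d powr (B / (A + B))"
proof -
  have n3: "\<forall>\<^sub>F n in sequentially. real n ^ 3 \<noteq> 0"
    using eventually_gt_at_top[of 0] by eventually_elim simp
  have "(\<lambda>n. real (\<Sum>I\<in>lattice_pts C n. fst I) / real (deg_sum C n)) \<longlonglongrightarrow> A / (A + B)"
    "(\<lambda>n. real (\<Sum>I\<in>lattice_pts C n. snd I) / real (deg_sum C n)) \<longlonglongrightarrow> B / (A + B)"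
    using tendsto_share[OF first second _ n3] tendsto_share[OF second first _ n3] A_pos B_pos
    by (simp_all add: deg_sum_eq add.commute del: of_nat_sum)
  then show ?thesis using assms A_pos B_pos by (intro tendsto_mult tendsto_powr2 tendsto_const) auto
qed

lemma vander_max_root_upper:
  assumes E: "compact E" "E \<noteq> {}" and F: "compact F" "F \<noteq> {}" and t: "0 < t"
  obtains u where "u \<longlonglongrightarrow> (chebyshev_constant E + t) powr (A / (A + B)) * (chebyshev_constant F + t) powr (B / (A + B))"
    and "\<forall>\<^sub>F n in sequentially. vander_max C (E \<times> F) n powr (1 / real (deg_sum C n)) \<le> u n"
proof -
  let ?TE = "chebyshev_constant E" and ?TF = "chebyshev_constant F"
  obtain P ME where P: "monic_seq P" "1 \<le> ME" "\<And>j z. z \<in> E \<Longrightarrow> cmod (poly (P j) z) \<le> ME * (?TE + t) ^ j"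
    using monic_seq_geometric_bound[OF E t] by blast
  obtain Q MF where Q: "monic_seq Q" "1 \<le> MF" "\<And>j z. z \<in> F \<Longrightarrow> cmod (poly (Q j) z) \<le> MF * (?TF + t) ^ j"
    using monic_seq_geometric_bound[OF F t] by blast
  define N where "N n = card (lattice_pts C n)" for n
  have "1 \<le> ME * MF" using mult_mono[OF P(2) Q(2)] P(2) by simp
  moreover have "\<forall>\<^sub>F n in sequentially. real (N n) \<le> K * real n ^ 2 \<and> A / 2 * real n ^ 3 \<le> real (deg_sum C n)"
    using eventually_moments by eventually_elim (simp add: N_def card)
  ultimately have "(\<lambda>n. (fact (N n) * (ME * MF) ^ N n) powr (1 / real (deg_sum C n))) \<longlonglongrightarrow> 1"
    using A_pos by (intro fact_power_root_tendsto_1[OF _ K_pos, where A = "A / 2"]) auto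
  moreover have c: "0 \<le> ?TE + t" "0 \<le> ?TF + t"
    using t chebyshev_constant_nonneg[of E] chebyshev_constant_nonneg[of F] by auto
  ultimately have "(\<lambda>n. (fact (N n) * (ME * MF) ^ N n) powr (1 / real (deg_sum C n)) *
      ((?TE + t) powr (real (\<Sum>I\<in>lattice_pts C n. fst I) / real (deg_sum C n)) *
       (?TF + t) powr (real (\<Sum>I\<in>lattice_pts C n. snd I) / real (deg_sum C n))))
    \<longlonglongrightarrow> 1 * ((?TE + t) powr (A / (A + B)) * (?TF + t) powr (B / (A + B)))"
    by (intro tendsto_mult weighted_tendsto)
  moreover have "\<forall>\<^sub>F n in sequentially. vander_max C (E \<times> F) n powr (1 / real (deg_sum C n))
      \<le> (fact (N n) * (ME * MF) ^ N n) powr (1 / real (deg_sum C n)) *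
      ((?TE + t) powr (real (\<Sum>I\<in>lattice_pts C n. fst I) / real (deg_sum C n)) *
       (?TF + t) powr (real (\<Sum>I\<in>lattice_pts C n. snd I) / real (deg_sum C n)))"
    using eventually_moments by eventually_elim
      (unfold N_def, rule vander_max_root_le[OF E F finite lower _ _ P(1,3) Q(1,3) c], auto)
  ultimately show ?thesis using that by simp
qed

theorem C_transfinite_diameter_product:
  assumes E: "compact E" "E \<noteq> {}" and F: "compact F" "F \<noteq> {}"
  shows "C_transfinite_diameter C (E \<times> F) =
    ereal (chebyshev_constant E powr (A / (A + B)) * chebyshev_constant F powr (B / (A + B)))"
  unfolding C_transfinite_diameter_def
proof (rule limsup_eq_by_squeeze)
  let ?TE = "chebyshev_constant E" and ?TF = "chebyshev_constant F"
  let ?\<alpha> = "A / (A + B)" and ?\<beta> = "B / (A + B)"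
  show "\<forall>\<^sub>F n in sequentially. ?TE powr (real (\<Sum>I\<in>lattice_pts C n. fst I) / real (deg_sum C n)) *
      ?TF powr (real (\<Sum>I\<in>lattice_pts C n. snd I) / real (deg_sum C n))
      \<le> vander_max C (E \<times> F) n powr (1 / real (deg_sum C n))"
    using eventually_moments by eventually_elim (rule vander_max_root_ge[OF E F finite lower], auto)
  show "(\<lambda>n. ?TE powr (real (\<Sum>I\<in>lattice_pts C n. fst I) / real (deg_sum C n)) *
      ?TF powr (real (\<Sum>I\<in>lattice_pts C n. snd I) / real (deg_sum C n))) \<longlonglongrightarrow> ?TE powr ?\<alpha> * ?TF powr ?\<beta>"
    by (rule weighted_tendsto) (simp_all add: chebyshev_constant_nonneg)
next
  let ?TE = "chebyshev_constant E" and ?TF = "chebyshev_constant F"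
  let ?\<alpha> = "A / (A + B)" and ?\<beta> = "B / (A + B)"
  fix \<eta> :: real assume "0 < \<eta>"
  have pos: "\<forall>\<^sub>F t in at_right 0. 0 < (t::real)" by (rule eventually_at_right_less)
  have "((\<lambda>t. (?TE + t) powr ?\<alpha> * (?TF + t) powr ?\<beta>) \<longlongrightarrow> (?TE + 0) powr ?\<alpha> * (?TF + 0) powr ?\<beta>)
      (at_right 0)"
    using A_pos B_pos chebyshev_constant_nonneg[of E] chebyshev_constant_nonneg[of F]
    by (intro tendsto_intros) (auto intro!: eventually_mono[OF pos])
  then have "\<forall>\<^sub>F t in at_right 0. (?TE + t) powr ?\<alpha> * (?TF + t) powr ?\<beta> < ?TE powr ?\<alpha> * ?TF powr ?\<beta> + \<eta>"
    using \<open>0 < \<eta>\<close> by (intro order_tendstoD(2)) auto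
  then obtain t where t: "0 < t" "(?TE + t) powr ?\<alpha> * (?TF + t) powr ?\<beta> < ?TE powr ?\<alpha> * ?TF powr ?\<beta> + \<eta>"
    using eventually_happens'[OF trivial_limit_at_right_real eventually_conj[OF pos]] by blast
  obtain u where "u \<longlonglongrightarrow> (?TE + t) powr ?\<alpha> * (?TF + t) powr ?\<beta>"
    "\<forall>\<^sub>F n in sequentially. vander_max C (E \<times> F) n powr (1 / real (deg_sum C n)) \<le> u n"
    using vander_max_root_upper[OF E F t(1)] by blast
  then show "\<exists>u U. u \<longlonglongrightarrow> U \<and> U \<le> ?TE powr ?\<alpha> * ?TF powr ?\<beta> + \<eta> \<and>
      (\<forall>\<^sub>F n in sequentially. vander_max C (E \<times> F) n powr (1 / real (deg_sum C n)) \<le> u n)"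
    using t(2) by force
qed

end

section \<open>Lattice points under a graph\<close>

lemma integrable_times_antimono:
  fixes \<phi> :: "real \<Rightarrow> real"
  assumes anti: "\<And>u v. u \<le> v \<Longrightarrow> \<phi> v \<le> \<phi> u" and nonneg: "\<And>u. 0 \<le> \<phi> u" and R: "0 \<le> R"
  shows "(\<lambda>u. u * \<phi> u) integrable_on {0..R}"
proof -
  have "mono_on {0..R} (\<lambda>u. - (R * \<phi> u))" "mono_on {0..R} (\<lambda>u. - ((R - u) * \<phi> u))"
    using anti nonneg R by (auto simp: mono_on_def intro!: mult_left_mono mult_mono)
  then have "(\<lambda>u. R * \<phi> u) integrable_on {0..R}" "(\<lambda>u. (R - u) * \<phi> u) integrable_on {0..R}"
    using integrable_neg[OF integrable_on_mono_on] by fastforce+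
  then have "(\<lambda>u. R * \<phi> u - (R - u) * \<phi> u) integrable_on {0..R}" by (rule integrable_diff)
  then show ?thesis by (simp add: algebra_simps)
qed

lemma integral_uniform_pieces:
  fixes h :: "real \<Rightarrow> real"
  assumes n: "0 < n" and int: "h integrable_on {0..real m / n}"
  shows "integral {0..real m / n} h = (\<Sum>j<m. integral {real j / n..real (Suc j) / n} h)"
  using int
proof (induction m)
  case (Suc m)
  have le: "real m / n \<le> real (Suc m) / n" using n by (simp add: divide_right_mono)
  have "h integrable_on {0..real m / n}"
    by (rule integrable_on_subinterval[OF Suc.prems]) (use le in auto)
  moreover have "integral {0..real (Suc m) / n} h =
      integral {0..real m / n} h + integral {real m / n..real (Suc m) / n} h"
    by (rule Henstock_Kurzweil_Integration.integral_combine[symmetric]) (use n le Suc.prems in auto)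
  ultimately show ?case using Suc.IH by simp
qed simp

lemma integral_cell_bounds:
  fixes \<phi> :: "real \<Rightarrow> real" and n :: real and j :: nat
  assumes anti: "\<And>u v. u \<le> v \<Longrightarrow> \<phi> v \<le> \<phi> u" and nonneg: "\<And>u. 0 \<le> \<phi> u" and n: "0 < n"
  defines "cell \<equiv> {real j / n..real (Suc j) / n}"
  shows "real j / n * \<phi> (real (Suc j) / n) / n \<le> integral cell (\<lambda>u. u * \<phi> u)"
    and "integral cell (\<lambda>u. u * \<phi> u) \<le> real (Suc j) / n * \<phi> (real j / n) / n"
proof -
  have le: "real j / n \<le> real (Suc j) / n" using n by (simp add: divide_right_mono)
  have pointwise: "real j / n * \<phi> (real (Suc j) / n) \<le> u * \<phi> u \<and> u * \<phi> u \<le> real (Suc j) / n * \<phi> (real j / n)"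
    if "u \<in> cell" for u
  proof -
    have "real j / n \<le> u" "u \<le> real (Suc j) / n" using that by (simp_all add: cell_def)
    moreover have "0 \<le> real j / n" using n by simp
    ultimately show ?thesis using anti nonneg by (intro conjI mult_mono) auto
  qed
  have int: "(\<lambda>u. u * \<phi> u) integrable_on cell"
    unfolding cell_def
    by (rule integrable_on_subinterval[OF integrable_times_antimono[OF anti nonneg, where R = "real (Suc j) / n"]])
      (use n in \<open>auto simp: divide_right_mono\<close>)
  have const: "(\<lambda>_. c) integrable_on cell" for c :: real unfolding cell_def by (rule integrable_const_ivl)
  have "integral cell (\<lambda>_. real j / n * \<phi> (real (Suc j) / n)) \<le> integral cell (\<lambda>u. u * \<phi> u)"
      "integral cell (\<lambda>u. u * \<phi> u) \<le> integral cell (\<lambda>_. real (Suc j) / n * \<phi> (real j / n))"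
    by (intro integral_le int const; use pointwise in blast)+
  moreover have "real (Suc j) / n - real j / n = 1 / n" using n by (simp add: field_simps)
  ultimately show "real j / n * \<phi> (real (Suc j) / n) / n \<le> integral cell (\<lambda>u. u * \<phi> u)"
      "integral cell (\<lambda>u. u * \<phi> u) \<le> real (Suc j) / n * \<phi> (real j / n) / n"
    using le by (simp_all add: cell_def)
qed

lemma integral_eq_sum_cells:
  fixes \<phi> :: "real \<Rightarrow> real" and n :: real
  assumes anti: "\<And>u v. u \<le> v \<Longrightarrow> \<phi> v \<le> \<phi> u" and nonneg: "\<And>u. 0 \<le> \<phi> u"
    and zero: "\<And>u. b < u \<Longrightarrow> \<phi> u = 0" and b: "0 \<le> b" and n: "0 < n" and bm: "b \<le> real m / n"
  shows "integral {0..b} (\<lambda>u. u * \<phi> u) = (\<Sum>j<m. integral {real j / n..real (Suc j) / n} (\<lambda>u. u * \<phi> u))"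
proof -
  have int: "(\<lambda>u. u * \<phi> u) integrable_on {0..R}" if "0 \<le> R" for R
    by (rule integrable_times_antimono[OF anti nonneg that])
  have "integral {0..b} (\<lambda>u. u * \<phi> u) + integral {b..real m / n} (\<lambda>u. u * \<phi> u) =
      integral {0..real m / n} (\<lambda>u. u * \<phi> u)"
    by (rule Henstock_Kurzweil_Integration.integral_combine) (use b bm int[of "real m / n"] in auto)
  moreover have "integral {b..real m / n} (\<lambda>u. u * \<phi> u) = 0"
    by (subst integral_spike[of "{b}" _ "\<lambda>_. 0"]) (auto simp: zero)
  ultimately show ?thesis using integral_uniform_pieces[OF n int] b bm by simp
qed

text \<open>On each cell of width \<open>1/n\<close> the integrand \<open>u \<phi>(u)\<close> lies between its values at the two
  endpoints, so the Riemann sum errs by at most \<open>D/n^2\<close> per cell.\<close>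

lemma riemann_sum_moment_error:
  fixes \<phi> :: "real \<Rightarrow> real" and n :: real
  assumes anti: "\<And>u v. u \<le> v \<Longrightarrow> \<phi> v \<le> \<phi> u" and nonneg: "\<And>u. 0 \<le> \<phi> u" and ub: "\<And>u. \<phi> u \<le> D"
    and zero: "\<And>u. b < u \<Longrightarrow> \<phi> u = 0" and b: "0 \<le> b" and n: "0 < n" and bK: "b \<le> real K / n"
  shows "\<bar>(\<Sum>j<K. real (Suc j) / n * \<phi> (real (Suc j) / n) / n) - integral {0..b} (\<lambda>u. u * \<phi> u)\<bar>
           \<le> real (K + 1) * D / n ^ 2"
proof -
  define \<psi> where "\<psi> = (\<lambda>u. u * \<phi> u)"
  define T where "T = (\<Sum>j<K. real (Suc j) / n * \<phi> (real (Suc j) / n) / n)"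
  note cell_bounds = integral_cell_bounds[OF anti nonneg n]
  have integral_eq: "integral {0..b} \<psi> = (\<Sum>j<m. integral {real j / n..real (Suc j) / n} \<psi>)"
    if "b \<le> real m / n" for m
    unfolding \<psi>_def by (rule integral_eq_sum_cells) (use anti nonneg zero b n that in auto)
  have D: "0 \<le> D" using nonneg ub order_trans by blast
  have "T - integral {0..b} \<psi> \<le> (\<Sum>j<K. \<phi> (real (Suc j) / n) / n ^ 2)"
  proof -
    have "(\<Sum>j<K. real j / n * \<phi> (real (Suc j) / n) / n) \<le> integral {0..b} \<psi>"
      unfolding integral_eq[OF bK] unfolding \<psi>_def by (intro sum_mono cell_bounds)
    moreover have "T - (\<Sum>j<K. real j / n * \<phi> (real (Suc j) / n) / n) = (\<Sum>j<K. \<phi> (real (Suc j) / n) / n ^ 2)"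
      unfolding T_def sum_subtractf[symmetric] using n
      by (intro sum.cong refl) (simp add: field_simps power2_eq_square)
    ultimately show ?thesis by linarith
  qed
  also have "\<dots> \<le> (\<Sum>j<K. D / n ^ 2)" by (intro sum_mono divide_right_mono ub) simp
  also have "\<dots> \<le> real (K + 1) * D / n ^ 2" using D n by (simp, intro divide_right_mono mult_right_mono) auto
  finally have lower: "T - integral {0..b} \<psi> \<le> real (K + 1) * D / n ^ 2" .
  have "real K / n \<le> real (Suc K) / n" using n by (simp add: divide_right_mono)
  then have "integral {0..b} \<psi> = (\<Sum>j<Suc K. integral {real j / n..real (Suc j) / n} \<psi>)"
    using bK by (intro integral_eq) simp
  also have "\<dots> \<le> (\<Sum>j<Suc K. real (Suc j) / n * \<phi> (real j / n) / n)"
    unfolding \<psi>_def by (intro sum_mono cell_bounds)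
  also have "\<dots> = T + (\<Sum>j<Suc K. \<phi> (real j / n) / n ^ 2)"
  proof -
    have "(\<Sum>j<Suc K. real (Suc j) / n * \<phi> (real j / n) / n) =
        (\<Sum>j<Suc K. real j / n * \<phi> (real j / n) / n) + (\<Sum>j<Suc K. \<phi> (real j / n) / n ^ 2)"
      unfolding sum.distrib[symmetric] using n
      by (intro sum.cong refl) (simp add: field_simps power2_eq_square)
    then show ?thesis unfolding T_def sum.lessThan_Suc_shift by simp
  qed
  also have "(\<Sum>j<Suc K. \<phi> (real j / n) / n ^ 2) \<le> real (K + 1) * D / n ^ 2"
    using sum_mono[of "{..<Suc K}" "\<lambda>j. \<phi> (real j / n) / n ^ 2" "\<lambda>_. D / n ^ 2"] ub n
    by (simp add: divide_right_mono)
  finally have "integral {0..b} \<psi> - T \<le> real (K + 1) * D / n ^ 2" by simp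
  with lower show ?thesis by (simp add: T_def \<psi>_def abs_le_iff)
qed

lemma card_nat_le_real:
  fixes h :: real
  assumes "0 \<le> h"
  shows "h \<le> real (card {j::nat. real j \<le> h})" and "real (card {j::nat. real j \<le> h}) \<le> h + 1"
proof -
  have "{j::nat. real j \<le> h} = {..nat \<lfloor>h\<rfloor>}"
    using assms by (auto simp: le_nat_iff le_floor_iff)
  then have "real (card {j::nat. real j \<le> h}) = real_of_int \<lfloor>h\<rfloor> + 1" using assms by simp
  then show "h \<le> real (card {j::nat. real j \<le> h})" and "real (card {j::nat. real j \<le> h}) \<le> h + 1"
    by linarith+
qed

lemma dil_Sigma_simplex_iff:
  assumes "0 < t"
  shows "(x, y) \<in> dil t Sigma_simplex \<longleftrightarrow> 0 \<le> x \<and> 0 \<le> y \<and> x + y \<le> t"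
proof
  assume "(x, y) \<in> dil t Sigma_simplex"
  then obtain p q where "0 \<le> p" "0 \<le> q" "p + q \<le> 1" "x = t * p" "y = t * q"
    by (auto simp: dil_def Sigma_simplex_def)
  then show "0 \<le> x \<and> 0 \<le> y \<and> x + y \<le> t"
    using assms mult_left_mono[of "p + q" 1 t] by (simp add: distrib_left)
next
  assume "0 \<le> x \<and> 0 \<le> y \<and> x + y \<le> t"
  then have "(x / t, y / t) \<in> Sigma_simplex"
    using assms by (auto simp: Sigma_simplex_def add_divide_distrib[symmetric] divide_le_eq)
  moreover have "(x, y) = t *\<^sub>R (x / t, y / t)" using assms by simp
  ultimately show "(x, y) \<in> dil t Sigma_simplex" unfolding dil_def by blast
qed

lemma lattice_pts_iff:
  assumes "0 < n"
  shows "(j1, j2) \<in> lattice_pts C n \<longleftrightarrow> (real j1 / real n, real j2 / real n) \<in> C"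
proof -
  have "(real j1, real j2) = real n *\<^sub>R p \<longleftrightarrow> p = (real j1 / real n, real j2 / real n)" for p :: "real \<times> real"
    using assms by (cases p) (auto simp: field_simps)
  then show ?thesis by (auto simp: lattice_pts_def dil_def image_iff)
qed

lemma
  fixes C :: "(real \<times> real) set"
  assumes outer: "C \<subseteq> dil \<delta> Sigma_simplex" and \<delta>: "0 < \<delta>" and n: "1 \<le> n"
  shows lattice_pts_subset_square:
      "lattice_pts C n \<subseteq> {..nat \<lceil>real n * \<delta>\<rceil>} \<times> {..nat \<lceil>real n * \<delta>\<rceil>}"
    and finite_lattice_pts: "finite (lattice_pts C n)"
    and card_lattice_pts_le: "real (card (lattice_pts C n)) \<le> (\<delta> + 2) ^ 2 * real n ^ 2"
proof -
  define M where "M = nat \<lceil>real n * \<delta>\<rceil>"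
  have "real M = real_of_int \<lceil>real n * \<delta>\<rceil>" using \<delta> by (simp add: M_def)
  then have M: "real n * \<delta> \<le> real M" "real M \<le> real n * \<delta> + 1"
    by (simp_all add: of_int_ceiling_le_add_one)
  have sub: "lattice_pts C n \<subseteq> {..M} \<times> {..M}"
  proof
    fix p assume p: "p \<in> lattice_pts C n"
    obtain j1 j2 where j: "p = (j1, j2)" by fastforce
    have "real j1 / real n + real j2 / real n \<le> \<delta>"
      using outer p lattice_pts_iff[of n j1 j2 C] n dil_Sigma_simplex_iff[OF \<delta>] by (auto simp: j)
    then have "real j1 + real j2 \<le> real n * \<delta>"
      using n by (simp add: field_simps add_divide_distrib[symmetric])
    then show "p \<in> {..M} \<times> {..M}" using M by (simp add: j)
  qed
  then show "lattice_pts C n \<subseteq> {..nat \<lceil>real n * \<delta>\<rceil>} \<times> {..nat \<lceil>real n * \<delta>\<rceil>}"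
    by (simp add: M_def)
  show "finite (lattice_pts C n)" using sub by (rule finite_subset) simp
  have "card (lattice_pts C n) \<le> (M + 1) ^ 2"
    using card_mono[OF _ sub] by (simp add: card_cartesian_product power2_eq_square)
  then have "real (card (lattice_pts C n)) \<le> (real M + 1) ^ 2" by (metis of_nat_1 of_nat_add of_nat_le_iff of_nat_power)
  also have "\<dots> \<le> ((\<delta> + 2) * real n) ^ 2"
    using M n \<delta> by (intro power_mono) (auto simp: algebra_simps)
  finally show "real (card (lattice_pts C n)) \<le> (\<delta> + 2) ^ 2 * real n ^ 2"
    by (simp add: power_mult_distrib)
qed

lemma sum_fst_by_columns:
  assumes "S \<subseteq> {..K} \<times> UNIV" and "finite S"
  shows "(\<Sum>I\<in>S. fst I) = (\<Sum>j<K. Suc j * card {j2. (Suc j, j2) \<in> S})"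
proof -
  have S: "S = Sigma {..K} (\<lambda>j. {j2. (j, j2) \<in> S})" using assms(1) by auto
  have fin: "finite {j2. (j, j2) \<in> S}" for j
    using finite_imageI[OF assms(2), of snd] by (rule finite_subset[rotated]) force
  have "(\<Sum>I\<in>S. fst I) = (\<Sum>j\<le>K. \<Sum>j2\<in>{j2. (j, j2) \<in> S}. j)"
    by (subst S, subst sum.Sigma) (auto simp: fin split_def)
  also have "\<dots> = (\<Sum>j<Suc K. j * card {j2. (j, j2) \<in> S})"
    by (simp add: lessThan_Suc_atMost mult.commute)
  also have "\<dots> = (\<Sum>j<K. Suc j * card {j2. (Suc j, j2) \<in> S})"
    unfolding sum.lessThan_Suc_shift by simp
  finally show ?thesis .
qed

lemma weighted_sum_error_le:
  fixes c \<phi> :: "nat \<Rightarrow> real" and n :: real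
  assumes n: "0 < n" and approx: "\<And>j. j < K \<Longrightarrow> \<bar>c j - n * \<phi> j\<bar> \<le> 1"
  shows "\<bar>(\<Sum>j<K. real (Suc j) * c j) / n ^ 3 - (\<Sum>j<K. real (Suc j) / n * \<phi> j / n)\<bar> \<le> real K ^ 2 / n ^ 3"
proof -
  have "(\<Sum>j<K. real (Suc j) / n * \<phi> j / n) = (\<Sum>j<K. real (Suc j) * (n * \<phi> j)) / n ^ 3"
    unfolding sum_divide_distrib by (intro sum.cong refl) (use n in \<open>simp add: field_simps power3_eq_cube\<close>)
  then have "(\<Sum>j<K. real (Suc j) * c j) / n ^ 3 - (\<Sum>j<K. real (Suc j) / n * \<phi> j / n) =
      (\<Sum>j<K. real (Suc j) * (c j - n * \<phi> j)) / n ^ 3"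
    by (simp add: diff_divide_distrib sum_subtractf right_diff_distrib)
  moreover have "\<bar>\<Sum>j<K. real (Suc j) * (c j - n * \<phi> j)\<bar> \<le> (\<Sum>j<K. real K)"
  proof (rule order_trans[OF sum_abs sum_mono])
    fix j assume "j \<in> {..<K}"
    then show "\<bar>real (Suc j) * (c j - n * \<phi> j)\<bar> \<le> real K"
      using approx[of j] mult_mono[of "real (Suc j)" "real K" "\<bar>c j - n * \<phi> j\<bar>" 1]
      by (simp add: abs_mult)
  qed
  ultimately show ?thesis using n by (simp add: abs_divide divide_right_mono power2_eq_square)
qed

locale region_under_graph =
  fixes C :: "(real \<times> real) set" and \<delta> b :: real and f :: "real \<Rightarrow> real"
  assumes outer: "C \<subseteq> dil \<delta> Sigma_simplex"
    and b_pos: "0 < b"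
    and mem_iff: "\<And>x y. 0 < x \<Longrightarrow> (x, y) \<in> C \<longleftrightarrow> x \<le> b \<and> 0 \<le> y \<and> y \<le> f x"
    and antimono: "\<And>x y. 0 < x \<Longrightarrow> x \<le> y \<Longrightarrow> y \<le> b \<Longrightarrow> f y \<le> f x"
    and nonneg: "\<And>x. 0 < x \<Longrightarrow> x \<le> b \<Longrightarrow> 0 \<le> f x"
begin

lemma delta_pos: "0 < \<delta>"
proof -
  have "(b, 0) \<in> C" using mem_iff[OF b_pos] nonneg[OF b_pos] by simp
  then obtain p q where "0 \<le> p" "b = \<delta> * p" using outer by (auto simp: dil_def Sigma_simplex_def)
  then show ?thesis using b_pos by (metis mult_nonpos_nonneg not_le)
qed

lemma graph_le_delta:
  assumes "0 < x" "x \<le> b"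
  shows "x + f x \<le> \<delta>"
  using outer mem_iff[OF assms(1), of "f x"] nonneg[OF assms] assms dil_Sigma_simplex_iff[OF delta_pos]
  by auto

text \<open>The profile extends \<open>f\<close> to an antitone function on the whole line, to which the estimate
  for Riemann sums applies.\<close>

definition profile :: "real \<Rightarrow> real" where
  "profile u = (if u \<le> 0 then \<delta> else if u \<le> b then f u else 0)"

lemma profile_antimono: "u \<le> v \<Longrightarrow> profile v \<le> profile u"
  using antimono[of u v] graph_le_delta[of v] nonneg[of v] nonneg[of u] delta_pos
  by (auto simp: profile_def)

lemma profile_bounds: "0 \<le> profile u" "profile u \<le> \<delta>"
  using graph_le_delta[of u] nonneg[of u] delta_pos by (auto simp: profile_def)

lemma column_card_approx:
  assumes n: "0 < n" and j: "0 < j"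
  shows "\<bar>real (card {j2. (j, j2) \<in> lattice_pts C n}) - real n * profile (real j / real n)\<bar> \<le> 1"
proof -
  have x: "0 < real j / real n" using n j by simp
  show ?thesis
  proof (cases "real j / real n \<le> b")
    case True
    have "{j2. (j, j2) \<in> lattice_pts C n} = {j2::nat. real j2 \<le> real n * f (real j / real n)}"
      using mem_iff[OF x] lattice_pts_iff[OF n] True n by (auto simp: divide_le_eq mult.commute)
    then show ?thesis
      using card_nat_le_real[of "real n * f (real j / real n)"] nonneg[OF x True] True x
      by (simp add: profile_def abs_le_iff)
  next
    case False
    then have "{j2. (j, j2) \<in> lattice_pts C n} = {}" using mem_iff[OF x] lattice_pts_iff[OF n] by auto
    then show ?thesis using False x by (simp add: profile_def)
  qed
qed

lemma first_moment_error:
  assumes n: "1 \<le> n"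
  shows "\<bar>real (\<Sum>I\<in>lattice_pts C n. fst I) / real n ^ 3 - integral {0..b} (\<lambda>u. u * f u)\<bar>
    \<le> (real n * \<delta> + 1) ^ 2 / real n ^ 3 + (real n * \<delta> + 2) * \<delta> / real n ^ 2"
proof -
  define K where "K = nat \<lceil>real n * \<delta>\<rceil>"
  have "real K = real_of_int \<lceil>real n * \<delta>\<rceil>" using delta_pos by (simp add: K_def)
  then have K: "real n * \<delta> \<le> real K" "real K \<le> real n * \<delta> + 1"
    by (simp_all add: of_int_ceiling_le_add_one)
  have n0: "0 < real n" using n by simp
  define T where "T = (\<Sum>j<K. real (Suc j) / n * profile (real (Suc j) / n) / n)"
  have bK: "b \<le> real K / real n"
  proof -
    have "b \<le> \<delta>" using graph_le_delta[OF b_pos order_refl] nonneg[OF b_pos order_refl] by linarith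
    then have "b * real n \<le> real K" using K(1) n0 by (metis mult.commute mult_right_mono order_trans less_imp_le)
    then show ?thesis using n0 by (simp add: field_simps)
  qed
  have "\<bar>T - integral {0..b} (\<lambda>u. u * profile u)\<bar> \<le> real (K + 1) * \<delta> / real n ^ 2"
    unfolding T_def
    by (rule riemann_sum_moment_error[where \<phi> = profile, OF profile_antimono profile_bounds _ _ n0 bK])
      (use b_pos in \<open>auto simp: profile_def\<close>)
  moreover have "integral {0..b} (\<lambda>u. u * profile u) = integral {0..b} (\<lambda>u. u * f u)"
    by (rule integral_cong) (auto simp: profile_def)
  moreover have "\<bar>real (\<Sum>I\<in>lattice_pts C n. fst I) / real n ^ 3 - T\<bar> \<le> real K ^ 2 / real n ^ 3"
  proof -
    have "lattice_pts C n \<subseteq> {..K} \<times> UNIV"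
      using lattice_pts_subset_square[OF outer delta_pos n] by (auto simp: K_def)
    then have "(\<Sum>I\<in>lattice_pts C n. fst I) = (\<Sum>j<K. Suc j * card {j2. (Suc j, j2) \<in> lattice_pts C n})"
      using finite_lattice_pts[OF outer delta_pos n] by (rule sum_fst_by_columns)
    then have "real (\<Sum>I\<in>lattice_pts C n. fst I) =
        (\<Sum>j<K. real (Suc j) * real (card {j2. (Suc j, j2) \<in> lattice_pts C n}))"
      by (simp only: of_nat_sum of_nat_mult)
    moreover have "\<bar>(\<Sum>j<K. real (Suc j) * real (card {j2. (Suc j, j2) \<in> lattice_pts C n})) / real n ^ 3 - T\<bar>
        \<le> real K ^ 2 / real n ^ 3"
      unfolding T_def
      by (rule weighted_sum_error_le[where c = "\<lambda>j. real (card {j2. (Suc j, j2) \<in> lattice_pts C n})"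
            and \<phi> = "\<lambda>j. profile (real (Suc j) / real n)", OF n0])
        (use n column_card_approx[of n "Suc j" for j] in auto)
    ultimately show ?thesis by simp
  qed
  moreover have "real K ^ 2 / real n ^ 3 + real (K + 1) * \<delta> / real n ^ 2
      \<le> (real n * \<delta> + 1) ^ 2 / real n ^ 3 + (real n * \<delta> + 2) * \<delta> / real n ^ 2"
    using K delta_pos by (intro add_mono divide_right_mono mult_right_mono power_mono) auto
  ultimately show ?thesis by linarith
qed

lemma first_moment_tendsto:
  "(\<lambda>n. real (\<Sum>I\<in>lattice_pts C n. fst I) / real n ^ 3) \<longlonglongrightarrow> integral {0..b} (\<lambda>u. u * f u)"
proof -
  have "(\<lambda>n. (real n * \<delta> + 1) ^ 2 / real n ^ 3 + (real n * \<delta> + 2) * \<delta> / real n ^ 2) \<longlonglongrightarrow> 0"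
    using delta_pos by real_asymp
  moreover have "\<forall>\<^sub>F n in sequentially.
      norm (real (\<Sum>I\<in>lattice_pts C n. fst I) / real n ^ 3 - integral {0..b} (\<lambda>u. u * f u))
      \<le> (real n * \<delta> + 1) ^ 2 / real n ^ 3 + (real n * \<delta> + 2) * \<delta> / real n ^ 2"
    using eventually_ge_at_top[of 1]
  proof eventually_elim
    case (elim n)
    show ?case using first_moment_error[OF elim] by (simp only: real_norm_def)
  qed
  ultimately have "(\<lambda>n. real (\<Sum>I\<in>lattice_pts C n. fst I) / real n ^ 3 - integral {0..b} (\<lambda>u. u * f u)) \<longlonglongrightarrow> 0"
    by (rule Lim_null_comparison[rotated])
  then show ?thesis by (rule LIM_zero_cancel)
qed

lemma first_moment_integral_pos:
  assumes \<epsilon>: "0 < \<epsilon>" and inner: "dil \<epsilon> Sigma_simplex \<subseteq> C"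
  shows "0 < integral {0..b} (\<lambda>u. u * f u)"
proof -
  have simplex: "(x, y) \<in> C" if "0 \<le> x" "0 \<le> y" "x + y \<le> \<epsilon>" for x y
    using inner that dil_Sigma_simplex_iff[OF \<epsilon>] by blast
  have \<epsilon>b: "\<epsilon> \<le> b" using simplex[of \<epsilon> 0] mem_iff[OF \<epsilon>] \<epsilon> by simp
  let ?\<psi> = "\<lambda>u. u * profile u"
  have int: "?\<psi> integrable_on {0..b}"
    using integrable_times_antimono[OF profile_antimono profile_bounds(1)] b_pos by simp
  have "0 < (\<epsilon> / 2 - \<epsilon> / 4) * (\<epsilon> / 4 * (\<epsilon> / 2))" using \<epsilon> by simp
  also have "(\<epsilon> / 2 - \<epsilon> / 4) * (\<epsilon> / 4 * (\<epsilon> / 2)) \<le> integral {\<epsilon> / 4..\<epsilon> / 2} ?\<psi>"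
  proof -
    have "\<epsilon> / 4 * (\<epsilon> / 2) \<le> ?\<psi> u" if "u \<in> {\<epsilon> / 4..\<epsilon> / 2}" for u
    proof -
      have "0 < u" "u \<le> b" using that \<epsilon> \<epsilon>b by auto
      moreover have "\<epsilon> - u \<le> f u" using simplex[of u "\<epsilon> - u"] mem_iff[of u "\<epsilon> - u"] that \<epsilon> by auto
      ultimately show ?thesis using that \<epsilon> by (intro mult_mono) (auto simp: profile_def)
    qed
    then have "integral {\<epsilon> / 4..\<epsilon> / 2} (\<lambda>_. \<epsilon> / 4 * (\<epsilon> / 2)) \<le> integral {\<epsilon> / 4..\<epsilon> / 2} ?\<psi>"
      using integrable_on_subinterval[OF int] \<epsilon> \<epsilon>b by (intro integral_le) auto
    then show ?thesis using \<epsilon> by simp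
  qed
  also have "\<dots> \<le> integral {0..b} ?\<psi>"
    using integrable_on_subinterval[OF int] \<epsilon> \<epsilon>b profile_bounds(1)
    by (intro integral_subset_le) (auto intro!: mult_nonneg_nonneg)
  also have "\<dots> = integral {0..b} (\<lambda>u. u * f u)"
    by (rule integral_cong) (auto simp: profile_def)
  finally show ?thesis .
qed

end

section \<open>Convex bodies bounded by a graph\<close>

lemma extreme_point_scaleR_notin:
  fixes x :: "'a::real_vector"
  assumes "x extreme_point_of S" "0 \<in> S" "x \<noteq> 0" "1 < t"
  shows "t *\<^sub>R x \<notin> S"
proof
  assume "t *\<^sub>R x \<in> S"
  moreover have "x \<in> open_segment 0 (t *\<^sub>R x)"
    unfolding in_segment using assms(3,4) by (auto intro!: exI[of _ "1 / t"])
  ultimately show False using assms(1,2) by (auto simp: extreme_point_of_def)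
qed

lemma ray_meets_frontier:
  fixes p v :: "'a::real_normed_vector"
  assumes "bounded S" "p \<in> S" "v \<noteq> 0"
  obtains t where "0 \<le> t" "p + t *\<^sub>R v \<in> frontier S"
proof -
  let ?ray = "(\<lambda>t. p + t *\<^sub>R v) ` {0..}"
  obtain B where B: "\<And>x. x \<in> S \<Longrightarrow> norm x \<le> B" using assms(1) by (meson bounded_iff)
  define t where "t = (B + norm p + 1) / norm v"
  have "0 \<le> B" using B[OF assms(2)] norm_ge_zero order_trans by blast
  then have t: "0 \<le> t" "t * norm v = B + norm p + 1" using assms(3) by (simp_all add: t_def)
  have "B < norm (p + t *\<^sub>R v)"
    using norm_triangle_ineq2[of "t *\<^sub>R v" "- p"] t by (simp add: add.commute)
  then have "p + t *\<^sub>R v \<in> ?ray - S" using t(1) B by force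
  moreover have "p \<in> ?ray \<inter> S" using assms(2) by force
  moreover have "connected ?ray"
    by (intro connected_continuous_image continuous_intros convex_connected) (simp add: convex_real_interval)
  ultimately have "?ray \<inter> frontier S \<noteq> {}" using connected_Int_frontier by blast
  then show ?thesis using that by auto
qed


lemma linear_swap: "linear (prod.swap :: 'a::real_vector \<times> 'b::real_vector \<Rightarrow> 'b \<times> 'a)"
  by (rule linearI) (auto simp: prod_eq_iff)

lemma swap_image_scaleR: "prod.swap ` ((\<lambda>p. t *\<^sub>R p) ` S) = (\<lambda>p. t *\<^sub>R p) ` (prod.swap ` S)"
  by (auto simp: image_image prod_eq_iff intro!: image_cong)

lemma swap_dil_Sigma_simplex: "prod.swap ` dil t Sigma_simplex = dil t Sigma_simplex"
proof -
  have "prod.swap ` Sigma_simplex = Sigma_simplex" by (force simp: Sigma_simplex_def image_iff)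
  then show ?thesis by (simp add: dil_def swap_image_scaleR)
qed

lemma outer_face_swap: "outer_face (prod.swap ` C) = prod.swap ` outer_face C"
proof -
  let ?axes = "{p :: real \<times> real. fst p = 0 \<or> snd p = 0}"
  have frontier: "frontier (prod.swap ` C) = prod.swap ` frontier C"
    unfolding frontier_def
    by (simp add: closure_injective_linear_image[OF linear_swap, symmetric]
        interior_injective_linear_image[OF linear_swap] image_set_diff)
  have "prod.swap ` ?axes = ?axes" by (force simp: image_iff)
  then have "frontier (prod.swap ` C) - ?axes = prod.swap ` (frontier C - ?axes)"
    by (simp add: frontier image_set_diff)
  then show ?thesis
    unfolding outer_face_def by (simp add: closure_injective_linear_image[OF linear_swap])
qed

lemma extreme_point_of_swap:
  assumes "x extreme_point_of C"
  shows "prod.swap x extreme_point_of prod.swap ` C"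
  unfolding extreme_point_of_def
proof (intro conjI ballI)
  show "prod.swap x \<in> prod.swap ` C" using assms by (simp add: extreme_point_of_def)
  fix p' q' assume "p' \<in> prod.swap ` C" "q' \<in> prod.swap ` C"
  then obtain p q where "p \<in> C" "q \<in> C" "p' = prod.swap p" "q' = prod.swap q" by blast
  then show "prod.swap x \<notin> open_segment p' q'"
    using assms by (simp add: extreme_point_of_def open_segment_linear_image[OF linear_swap] inj_image_mem_iff)
qed

lemma lattice_pts_swap: "lattice_pts (prod.swap ` C) n = prod.swap ` lattice_pts C n"
  by (force simp: lattice_pts_def dil_def swap_image_scaleR[symmetric] image_iff)

lemma sum_snd_lattice_pts: "(\<Sum>I\<in>lattice_pts C n. snd I) = (\<Sum>I\<in>lattice_pts (prod.swap ` C) n. fst I)"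
  by (simp add: lattice_pts_swap sum.reindex)

locale convex_graph_body =
  fixes C :: "(real \<times> real) set" and \<delta> a b :: real and f g :: "real \<Rightarrow> real"
  assumes compact_C: "compact C" and convex_C: "convex C" and origin: "(0, 0) \<in> C"
    and outer_C: "C \<subseteq> dil \<delta> Sigma_simplex"
    and a_pos: "0 < a" and b_pos: "0 < b"
    and ext_a: "(0, a) extreme_point_of C" and ext_b: "(b, 0) extreme_point_of C"
    and graph_f: "outer_face C = {(x, f x) | x. 0 \<le> x \<and> x \<le> b}"
    and graph_g: "outer_face C = {(g y, y) | y. 0 \<le> y \<and> y \<le> a}"
begin

lemma delta_pos: "0 < \<delta>"
proof -
  have "(b, 0) \<in> C" using ext_b by (simp add: extreme_point_of_def)
  then obtain p q where "0 \<le> p" "b = \<delta> * p" using outer_C by (auto simp: dil_def Sigma_simplex_def)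
  then show ?thesis using b_pos by (metis mult_nonpos_nonneg not_le)
qed

lemma quadrant: "(x, y) \<in> C \<Longrightarrow> 0 \<le> x \<and> 0 \<le> y"
  using outer_C dil_Sigma_simplex_iff[OF delta_pos] by auto

lemma outer_face_subset: "outer_face C \<subseteq> C"
proof -
  have "closed C" using compact_C by (rule compact_imp_closed)
  then show ?thesis
    unfolding outer_face_def using frontier_subset_closed by (intro closure_minimal) auto
qed

lemma frontier_off_axes_on_graph:
  assumes "(x, y) \<in> frontier C" "x \<noteq> 0" "y \<noteq> 0"
  shows "x \<le> b \<and> y = f x"
proof -
  have "(x, y) \<in> outer_face C"
    unfolding outer_face_def using assms by (auto intro: closure_subset[THEN subsetD])
  then show ?thesis using graph_f by auto
qed

lemma f_nonneg: "0 \<le> x \<Longrightarrow> x \<le> b \<Longrightarrow> 0 \<le> f x"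
  using quadrant[of x "f x"] outer_face_subset graph_f by auto

lemma axis_le_b:
  assumes "(x, 0) \<in> C"
  shows "x \<le> b"
proof (rule ccontr)
  assume "\<not> x \<le> b"
  then have "1 < x / b" using b_pos by simp
  moreover have "(b, 0) \<noteq> (0 :: real \<times> real)" using b_pos by (simp add: zero_prod_def)
  ultimately have "(x / b) *\<^sub>R (b, 0) \<notin> C"
    using extreme_point_scaleR_notin[OF ext_b origin[folded zero_prod_def]] by blast
  then show False using assms b_pos by simp
qed

text \<open>Moving right or up from a point of the body one reaches the frontier, which off the axes is
  the graph of \<open>f\<close>.\<close>

lemma below_graph_if_mem:
  assumes xy: "(x, y) \<in> C" and x: "0 < x"
  shows "x \<le> b \<and> y \<le> f x"
proof -
  have bounded: "bounded C" using compact_C by (rule compact_imp_bounded)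
  have "frontier C \<subseteq> C" using compact_C by (simp add: compact_imp_closed frontier_subset_closed)
  have "(1, 0) \<noteq> (0 :: real \<times> real)" "(0, 1) \<noteq> (0 :: real \<times> real)" by (simp_all add: zero_prod_def)
  then obtain s t where "0 \<le> s" "(x, y) + s *\<^sub>R (1, 0) \<in> frontier C"
    and "0 \<le> t" "(x, y) + t *\<^sub>R (0, 1) \<in> frontier C"
    using ray_meets_frontier[OF bounded xy] by metis
  then have s: "0 \<le> s" "(x + s, y) \<in> frontier C" and t: "0 \<le> t" "(x, y + t) \<in> frontier C"
    by simp_all
  have "x + s \<le> b"
    using s x frontier_off_axes_on_graph[of "x + s" y] axis_le_b \<open>frontier C \<subseteq> C\<close>
    by (cases "y = 0") auto
  then have "x \<le> b" using s by simp
  moreover have "y \<le> f x"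
    using t x quadrant[OF xy] frontier_off_axes_on_graph[of x "y + t"] f_nonneg[of x] \<open>x \<le> b\<close>
    by (cases "y + t = 0") auto
  ultimately show ?thesis by simp
qed

lemma mem_if_below_graph:
  assumes x: "0 < x" "x \<le> b" and y: "0 \<le> y" "y \<le> f x"
  shows "(x, y) \<in> C"
proof -
  have "(1 - x / b) *\<^sub>R (0, 0) + (x / b) *\<^sub>R (b, 0) \<in> C"
    using ext_b origin x b_pos by (intro convexD[OF convex_C]) (auto simp: extreme_point_of_def)
  then have x0: "(x, 0) \<in> C" using b_pos by simp
  have fx: "(x, f x) \<in> C" using outer_face_subset graph_f x by auto
  show ?thesis
  proof (cases "f x = 0")
    case False
    then have "0 < f x" using y by simp
    then have "(1 - y / f x) *\<^sub>R (x, 0) + (y / f x) *\<^sub>R (x, f x) \<in> C"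
      using y by (intro convexD[OF convex_C x0 fx]) auto
    then show ?thesis using \<open>0 < f x\<close> by (simp add: algebra_simps)
  qed (use y x0 in simp)
qed

lemma mem_iff_f: "0 < x \<Longrightarrow> (x, y) \<in> C \<longleftrightarrow> x \<le> b \<and> 0 \<le> y \<and> y \<le> f x"
  using below_graph_if_mem mem_if_below_graph quadrant by blast

lemma swap: "convex_graph_body (prod.swap ` C) \<delta> b a g f"
proof
  show "compact (prod.swap ` C)" by (rule compact_continuous_image[OF _ compact_C]) (intro continuous_intros)
  show "convex (prod.swap ` C)" by (rule convex_linear_image[OF linear_swap convex_C])
  show "prod.swap ` C \<subseteq> dil \<delta> Sigma_simplex"
    using image_mono[OF outer_C, of prod.swap] by (simp add: swap_dil_Sigma_simplex)
  show "(0, b) extreme_point_of prod.swap ` C" "(a, 0) extreme_point_of prod.swap ` C"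
    using extreme_point_of_swap[OF ext_b] extreme_point_of_swap[OF ext_a] by simp_all
  show "outer_face (prod.swap ` C) = {(x, g x) | x. 0 \<le> x \<and> x \<le> a}"
    "outer_face (prod.swap ` C) = {(f y, y) | y. 0 \<le> y \<and> y \<le> b}"
    unfolding outer_face_swap by (force simp: graph_g image_iff, force simp: graph_f image_iff)
qed (use origin a_pos b_pos in auto)

lemma mem_iff_g: "0 < y \<Longrightarrow> (x, y) \<in> C \<longleftrightarrow> y \<le> a \<and> 0 \<le> x \<and> x \<le> g y"
  using convex_graph_body.mem_iff_f[OF swap, of y x] by simp

text \<open>Monotonicity of \<open>f\<close> comes from the second graph description: the point \<open>(x1, f x2)\<close> lies left of
  \<open>(x2, f x2)\<close> on the same horizontal line, hence in the body.\<close>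

lemma f_antimono:
  assumes "0 < x1" "x1 \<le> x2" "x2 \<le> b"
  shows "f x2 \<le> f x1"
proof (cases "0 < f x2")
  case True
  then have "f x2 \<le> a \<and> x2 \<le> g (f x2)"
    using mem_iff_g[OF True, of x2] mem_iff_f[of x2 "f x2"] assms by simp
  then have "(x1, f x2) \<in> C" using mem_iff_g[OF True] assms by simp
  then show ?thesis using mem_iff_f[OF assms(1)] by simp
qed (use f_nonneg[of x1] assms in auto)

sublocale under_f: region_under_graph C \<delta> b f
  using outer_C b_pos mem_iff_f f_antimono f_nonneg by unfold_locales auto

lemma C_transfinite_diameter_eq:
  assumes \<epsilon>: "0 < \<epsilon>" and inner: "dil \<epsilon> Sigma_simplex \<subseteq> C"
    and lower: "\<And>n. 1 \<le> n \<Longrightarrow> lower_set (lattice_pts C n)"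
    and E: "compact E" "E \<noteq> {}" and F: "compact F" "F \<noteq> {}"
  defines "A \<equiv> integral {0..b} (\<lambda>u. u * f u)" and "B \<equiv> integral {0..a} (\<lambda>u. u * g u)"
  shows "0 < A" and "C_transfinite_diameter C (E \<times> F) =
    ereal (chebyshev_constant E powr (A / (A + B)) * chebyshev_constant F powr (B / (A + B)))"
proof -
  interpret swapped: convex_graph_body "prod.swap ` C" \<delta> b a g f by (rule swap)
  have "dil \<epsilon> Sigma_simplex \<subseteq> prod.swap ` C"
    using image_mono[OF inner, of prod.swap] by (simp add: swap_dil_Sigma_simplex)
  then have B: "0 < B" unfolding B_def by (rule swapped.under_f.first_moment_integral_pos[OF \<epsilon>])
  show A: "0 < A" unfolding A_def by (rule under_f.first_moment_integral_pos[OF \<epsilon> inner])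
  have second: "(\<lambda>n. real (\<Sum>I\<in>lattice_pts C n. snd I) / real n ^ 3) \<longlonglongrightarrow> B"
    unfolding B_def sum_snd_lattice_pts by (rule swapped.under_f.first_moment_tendsto)
  have "lattice_moments C A B ((\<delta> + 2) ^ 2)"
    by unfold_locales
      (use finite_lattice_pts[OF outer_C delta_pos] lower card_lattice_pts_le[OF outer_C delta_pos]
        under_f.first_moment_tendsto A B delta_pos second in \<open>simp_all add: A_def\<close>)
  then show "C_transfinite_diameter C (E \<times> F) =
      ereal (chebyshev_constant E powr (A / (A + B)) * chebyshev_constant F powr (B / (A + B)))"
    by (rule lattice_moments.C_transfinite_diameter_product[OF _ E F])
qed

end

theorem theorem5p1:
  fixes C :: "(real \<times> real) set" and \<epsilon> \<delta> a b :: real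
    and f g :: "real \<Rightarrow> real" and E F :: "complex set"
  assumes conv: "convex C" and cpt: "compact C" and int: "interior C \<noteq> {}"
    and eps: "0 < \<epsilon>" and epsdelta: "\<epsilon> < \<delta>"
    and inner: "dil \<epsilon> Sigma_simplex \<subseteq> C" and outer: "C \<subseteq> dil \<delta> Sigma_simplex"
    and lower: "\<forall>n::nat. n \<ge> 1 \<longrightarrow> (\<forall>j1 j2::nat. (j1, j2) \<in> lattice_pts C n \<longrightarrow>
                   (\<forall>k1 k2::nat. k1 \<le> j1 \<and> k2 \<le> j2 \<longrightarrow> (k1, k2) \<in> lattice_pts C n))"
    and a_pos: "0 < a" and b_pos: "0 < b"
    and ext_b: "(b, 0) extreme_point_of C" and ext_a: "(0, a) extreme_point_of C"
    and graph_f: "outer_face C = {(x, f x) | x. 0 \<le> x \<and> x \<le> b}"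
    and graph_g: "outer_face C = {(g y, y) | y. 0 \<le> y \<and> y \<le> a}"
    and E: "compact E" "E \<noteq> {}" and F: "compact F" "F \<noteq> {}"
  shows "C_transfinite_diameter C (E \<times> F) =
           ereal (transfinite_diameter E powr
                    (integral {0..b} (\<lambda>u. u * f u) /
                      (integral {0..b} (\<lambda>u. u * f u) + integral {0..a} (\<lambda>u. u * g u)))
                  * transfinite_diameter F powr
                    (integral {0..a} (\<lambda>u. u * g u) /
                      (integral {0..b} (\<lambda>u. u * f u) + integral {0..a} (\<lambda>u. u * g u))))
       \<and> (integral {0..b} (\<lambda>u. u * f u) = integral {0..a} (\<lambda>u. u * g u) \<longrightarrow>
           C_transfinite_diameter C (E \<times> F) =
             ereal ((transfinite_diameter E * transfinite_diameter F) powr (1/2)))"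
proof -
  define A B where "A = integral {0..b} (\<lambda>u. u * f u)" and "B = integral {0..a} (\<lambda>u. u * g u)"
  have "(0, 0) \<in> C" using inner dil_Sigma_simplex_iff[OF eps] eps by auto
  then interpret convex_graph_body C \<delta> a b f g
    using cpt conv outer a_pos b_pos ext_a ext_b graph_f graph_g by unfold_locales
  have "lower_set (lattice_pts C n)" if "1 \<le> n" for n using lower that by (simp add: lower_set_iff)
  note diameter = C_transfinite_diameter_eq[OF eps inner this E F, folded A_def B_def]
  show ?thesis
    unfolding A_def[symmetric] B_def[symmetric] transfinite_diameter_eq_chebyshev_constant[OF E]
      transfinite_diameter_eq_chebyshev_constant[OF F]
  proof (intro conjI impI diameter)
    assume "A = B"
    then have "A / (A + B) = 1 / 2" "B / (A + B) = 1 / 2" using diameter(1) by simp_all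
    then show "C_transfinite_diameter C (E \<times> F) =
        ereal ((chebyshev_constant E * chebyshev_constant F) powr (1 / 2))"
      using diameter(2) chebyshev_constant_nonneg[of E] chebyshev_constant_nonneg[of F]
      by (simp add: powr_mult)
  qed
qed

end
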